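(* Let $n \geq 1$. The number of PC prographs of size $n$ whose canonical labelling assigns the labels $1, 2, \dots, n$ to the coproducts and the labels $n+1, \dots, 2n$ to the products equals the number of ordered pairs $(T_1, T_2)$ of binary trees with $n$ nodes each such that $dg(T_1) + dg(T_2) \leq n$. Equivalently, $$\sum_{d_1 + d_2 \leq n} C(n-1, d_1)\, C(n-1, d_2) = \binom{3n}{n} - 2\binom{3n}{n-1} + \binom{3n}{n-2},$$ and this common value is the number of such PC prographs.
   Context: A PC prograph of size $n$ is a finite connected directed acyclic graph embedded in the plane (up to isotopy), drawn so that all edges go upward, whose $2n$ vertices are $n$ coproducts (one incoming edge, two outgoing edges distinguished as left and right) and $n$ products (two incoming edges distinguished as left and right, one outgoing edge); exactly one coproduct has its incoming slot unconnected (global input, at the bottom) and exactly one product has its outgoing slot unconnected (global output, at the top); all other slots are joined by edges. Canonical labelling: maintain a left-to-right sequence of edges (the frontier), initially the global input edge alone. An unlabelled operator is available if all of its incoming edges lie in the frontier. At each step, among available operators choose the one whose leftmost incoming edge is leftmost in the frontier, give it the next label (starting from $1$), and replace its incoming edge(s) in the frontier by its outgoing edge(s) in left-to-right order; stop when all $2n$ operators are labelled. Binary trees: each node has a possibly empty left and right subtree; a tree with $n$ nodes has $n+1$ empty subtrees (leaves), ordered from left to right. For a binary tree $T$ with at least one node, let $v$ be the last node visited in preorder (root, then left subtree, then right subtree); $dg(T)$ is the number of leaves of $T$ lying to the left of $v$ (i.e. preceding the leaves of $v$). For integers $m, k \geq 0$, $C(m,k) = \binom{m+k}{k} - \binom{m+k}{k-1}$,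 with $\binom{a}{-1} = 0$; binomial coefficients with negative lower index are $0$. *)

theory Defs
  imports Main "HOL-Library.Tree"
begin

(* ---------- PC prographs, encoded combinatorially ----------
   Operators are the vertices V = {1..2n}; vertex 0 stands for the outside
   (the unconnected global input/output slots).  A slot is a pair (vertex, index);
   index 0 = left, 1 = right.  cop v says that v is a coproduct (otherwise a product).
   An edge is a pair (output slot of its source, input slot of its target).
   The global input edge is the edge leaving the outside slot (0,0); the
   global output edge is the edge entering the outside slot (0,0). *)

type_synonym slot = "nat \<times> nat"
type_synonym pedge = "slot \<times> slot"

definition verts :: "nat \<Rightarrow> nat set" where
  "verts n = {1..2*n}"

definition outSlot :: "nat \<Rightarrow> (nat \<Rightarrow> bool) \<Rightarrow> slot \<Rightarrow> bool" where
  "outSlot n cop s = ((fst s = 0 \<and> snd s = 0) \<or>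
     (fst s \<in> verts n \<and> (if cop (fst s) then snd s < 2 else snd s = 0)))"

definition inSlot :: "nat \<Rightarrow> (nat \<Rightarrow> bool) \<Rightarrow> slot \<Rightarrow> bool" where
  "inSlot n cop s = ((fst s = 0 \<and> snd s = 0) \<or>
     (fst s \<in> verts n \<and> (if cop (fst s) then snd s = 0 else snd s < 2)))"

definition outEdge :: "pedge set \<Rightarrow> nat \<Rightarrow> nat \<Rightarrow> pedge" where
  "outEdge E v i = (THE e. e \<in> E \<and> fst e = (v, i))"

definition inEdge :: "pedge set \<Rightarrow> nat \<Rightarrow> nat \<Rightarrow> pedge" where
  "inEdge E v j = (THE e. e \<in> E \<and> snd e = (v, j))"

definition ins :: "(nat \<Rightarrow> bool) \<Rightarrow> pedge set \<Rightarrow> nat \<Rightarrow> pedge list" where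
  "ins cop E v = (if cop v then [inEdge E v 0] else [inEdge E v 0, inEdge E v 1])"

definition outs :: "(nat \<Rightarrow> bool) \<Rightarrow> pedge set \<Rightarrow> nat \<Rightarrow> pedge list" where
  "outs cop E v = (if cop v then [outEdge E v 0, outEdge E v 1] else [outEdge E v 0])"

definition globalIn :: "pedge set \<Rightarrow> pedge" where
  "globalIn E = outEdge E 0 0"

definition globalOut :: "pedge set \<Rightarrow> pedge" where
  "globalOut E = inEdge E 0 0"

definition adj :: "nat \<Rightarrow> pedge set \<Rightarrow> (nat \<times> nat) set" where
  "adj n E = {(fst (fst e), fst (snd e)) | e. e \<in> E \<and> fst (fst e) \<in> verts n \<and> fst (snd e) \<in> verts n}"

text \<open>Upward planar drawing: sweeping a horizontal line upward, the frontier
  (left-to-right sequence of crossed edges) changes one operator at a time, the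
  incoming edges of that operator being consecutive in the frontier in slot order
  and being replaced by its outgoing edges in slot order.\<close>
inductive sweeps :: "(nat \<Rightarrow> bool) \<Rightarrow> pedge set \<Rightarrow> pedge list \<Rightarrow> nat list \<Rightarrow> pedge list \<Rightarrow> bool"
  for cop E where
  sweeps_Nil: "sweeps cop E F [] F"
| sweeps_Cons: "sweeps cop E (A @ outs cop E v @ B) vs G \<Longrightarrow> sweeps cop E (A @ ins cop E v @ B) (v # vs) G"

definition upward_planar :: "nat \<Rightarrow> (nat \<Rightarrow> bool) \<Rightarrow> pedge set \<Rightarrow> bool" where
  "upward_planar n cop E = (\<exists>vs. distinct vs \<and> set vs = verts n \<and>
      sweeps cop E [globalIn E] vs [globalOut E])"

definition is_PC_prograph :: "nat \<Rightarrow> (nat \<Rightarrow> bool) \<Rightarrow> pedge set \<Rightarrow> bool" where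
  "is_PC_prograph n cop E = (
     card {v \<in> verts n. cop v} = n \<and>
     (\<forall>e\<in>E. outSlot n cop (fst e) \<and> inSlot n cop (snd e)) \<and>
     (\<forall>s. outSlot n cop s \<longrightarrow> (\<exists>!e. e \<in> E \<and> fst e = s)) \<and>
     (\<forall>s. inSlot n cop s \<longrightarrow> (\<exists>!e. e \<in> E \<and> snd e = s)) \<and>
     (fst (snd (globalIn E)) \<in> verts n \<and> cop (fst (snd (globalIn E)))) \<and>
     (fst (fst (globalOut E)) \<in> verts n \<and> \<not> cop (fst (fst (globalOut E)))) \<and>
     acyclic (adj n E) \<and>
     (\<forall>u\<in>verts n. \<forall>w\<in>verts n. (u, w) \<in> (adj n E \<union> (adj n E)\<inverse>)\<^sup>*) \<and>
     upward_planar n cop E)"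

definition pos :: "'a \<Rightarrow> 'a list \<Rightarrow> nat" where
  "pos x xs = (LEAST i. i < length xs \<and> xs ! i = x)"

definition frontier_step :: "(nat \<Rightarrow> bool) \<Rightarrow> pedge set \<Rightarrow> pedge list \<Rightarrow> nat \<Rightarrow> pedge list" where
  "frontier_step cop E F v =
     (let i = Min ((\<lambda>e. pos e F) ` set (ins cop E v))
      in take i F @ outs cop E v @ drop (i + length (ins cop E v)) F)"

fun frontier :: "(nat \<Rightarrow> bool) \<Rightarrow> pedge set \<Rightarrow> nat \<Rightarrow> pedge list" where
  "frontier cop E 0 = [globalIn E]"
| "frontier cop E (Suc k) = frontier_step cop E (frontier cop E k) (Suc k)"

definition available :: "nat \<Rightarrow> (nat \<Rightarrow> bool) \<Rightarrow> pedge set \<Rightarrow> nat \<Rightarrow> nat \<Rightarrow> bool" where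
  "available n cop E k w = (w \<in> verts n \<and> k < w \<and> set (ins cop E w) \<subseteq> set (frontier cop E k))"

definition leftpos :: "(nat \<Rightarrow> bool) \<Rightarrow> pedge set \<Rightarrow> pedge list \<Rightarrow> nat \<Rightarrow> nat" where
  "leftpos cop E F w = Min ((\<lambda>e. pos e F) ` set (ins cop E w))"

text \<open>The canonical labelling of the prograph assigns label k to operator k,
  for every k (i.e. the labels of the encoding ARE the canonical labels).\<close>
definition canonically_labelled :: "nat \<Rightarrow> (nat \<Rightarrow> bool) \<Rightarrow> pedge set \<Rightarrow> bool" where
  "canonically_labelled n cop E = (\<forall>k < 2*n.
      available n cop E k (Suc k) \<and>
      (\<forall>w. available n cop E k w \<and> w \<noteq> Suc k \<longrightarrow>
          leftpos cop E (frontier cop E k) (Suc k) < leftpos cop E (frontier cop E k) w))"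

definition PC_coprod_first :: "nat \<Rightarrow> pedge set set" where
  "PC_coprod_first n = {E. is_PC_prograph n (\<lambda>v. v \<le> n) E \<and> canonically_labelled n (\<lambda>v. v \<le> n) E}"

text \<open>dg T: number of leaves strictly left of the last node in preorder.
  Leaves of Node l r are the leaves of l followed by those of r.\<close>
fun dg :: "unit tree \<Rightarrow> nat" where
  "dg Leaf = 0"
| "dg (Node l _ r) = (if r \<noteq> Leaf then size l + 1 + dg r else if l \<noteq> Leaf then dg l else 0)"

definition Cb :: "nat \<Rightarrow> nat \<Rightarrow> int" where
  "Cb m k = int ((m + k) choose k) - (if k = 0 then 0 else int ((m + k) choose (k - 1)))"

end

theory Submission
  imports Defs "HOL-Computational_Algebra.Formal_Power_Series"
begin

text \<open>Growing the \<open>d\<close>-th leaf of a tree into a new node makes it the last node in preorder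
  exactly when the old tree has \<open>dg \<le> d\<close>; hence trees of size \<open>n\<close> with \<open>dg = d\<close> satisfy the
  ballot recurrence and are counted by \<open>Cb (n - 1) d\<close>.  A canonically labelled prograph with
  coproducts first is determined by the frontier positions at which its operators consume their
  inputs.  The coproduct positions form a weakly increasing sequence \<open>p\<close> with \<open>p!k \<le> k\<close>;
  the product positions, reversed and complemented, form another such sequence \<open>q\<close>, and the
  only constraint between the two halves is \<open>p!(n - 1) + q!(n - 1) \<le> n\<close>.  Sequences of this
  kind with last entry \<open>d\<close> again satisfy the ballot recurrence, so both sides equal the sum of
  \<open>Cb (n - 1) d1 * Cb (n - 1) d2\<close> over \<open>d1 + d2 \<le> n\<close>, which the upper Vandermonde identity
  evaluates in closed form.\<close>

section \<open>Ballot numbers\<close>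

lemma sum_Cb_atMost: "(\<Sum>k\<le>d. Cb m k) = Cb (Suc m) d"
proof (induction d)
  case 0
  then show ?case by (simp add: Cb_def)
next
  case (Suc d)
  have "Cb (Suc m) (Suc d) = Cb (Suc m) d + Cb m (Suc d)"
    by (cases d) (simp_all add: Cb_def)
  then show ?case using Suc by simp
qed

lemma ballot_recurrence_eq_Cb:
  fixes N :: "nat \<Rightarrow> nat \<Rightarrow> nat"
  assumes base: "N 1 0 = 1" "\<And>i. i > 0 \<Longrightarrow> N 1 i = 0"
    and step: "\<And>n i. n \<ge> 1 \<Longrightarrow> i \<le> n
        \<Longrightarrow> N (Suc n) i = (\<Sum>d\<le>i. N n d)"
    and vanish: "\<And>n i. n \<ge> 1 \<Longrightarrow> i > n \<Longrightarrow> N (Suc n) i = 0"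
  shows "d \<le> Suc n \<Longrightarrow> int (N (Suc n) d) = Cb n d"
proof (induction n arbitrary: d)
  case 0
  then consider "d = 0" | "d = 1" by linarith
  then show ?case
    by cases (simp_all add: base[unfolded One_nat_def] Cb_def)
next
  case (Suc n)
  show ?case
  proof (cases "d \<le> Suc n")
    case True
    have "int (N (Suc (Suc n)) d) = (\<Sum>j\<le>d. int (N (Suc n) j))"
      using step[of "Suc n" d] True by simp
    also have "\<dots> = (\<Sum>j\<le>d. Cb n j)"
      using Suc.IH True by (intro sum.cong) auto
    also have "\<dots> = Cb (Suc n) d" by (rule sum_Cb_atMost)
    finally show ?thesis .
  next
    case False
    then have d: "d = Suc (Suc n)" using Suc.prems by simp
    have "(Suc n + Suc (Suc n)) choose Suc (Suc n) = (Suc n + Suc (Suc n)) choose Suc n"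
      using binomial_symmetric[of "Suc (Suc n)" "Suc n + Suc (Suc n)"] by simp
    then show ?thesis using vanish[of "Suc n" d] d by (simp add: Cb_def)
  qed
qed

lemma of_nat_choose_eq_neg_gchoose:
  "(of_nat ((m + k) choose k) :: 'a :: field_char_0) = (-1)^k * ((- of_nat (m + 1)) gchoose k)"
proof -
  have "((- of_nat (m + 1)) gchoose k :: 'a) = (-1)^k * (of_nat (m + k) gchoose k)"
    using gbinomial_minus[of "of_nat (m + 1) :: 'a" k] by (simp add: add_ac)
  then show ?thesis
    by (simp add: binomial_gbinomial flip: power_add mult.assoc)
qed

lemma upper_vandermonde:
  "(\<Sum>k\<le>N. ((a + k) choose k) * ((c + (N - k)) choose (N - k))) = (a + c + N + 1) choose N"
proof -
  have "real (\<Sum>k\<le>N. ((a + k) choose k) * ((c + (N - k)) choose (N - k)))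
      = (\<Sum>k\<le>N. (-1)^N *
        (((- real (a + 1)) gchoose k) * ((- real (c + 1)) gchoose (N - k))))"
  proof (unfold of_nat_sum, rule sum.cong)
    fix k assume "k \<in> {..N}"
    then have "(-1::real)^k * (-1)^(N - k) = (-1)^N" by (simp flip: power_add)
    then show "real (((a + k) choose k) * ((c + (N - k)) choose (N - k))) =
        (-1)^N * (((- real (a + 1)) gchoose k) * ((- real (c + 1)) gchoose (N - k)))"
      unfolding of_nat_mult of_nat_choose_eq_neg_gchoose by (metis mult.assoc mult.left_commute)
  qed simp
  also have "\<dots> = (-1)^N * ((- real (a + c + 1 + 1)) gchoose N)"
    using gbinomial_Vandermonde[of "- real (a + 1)" "- real (c + 1)" N]
    by (simp add: atLeast0AtMost flip: sum_distrib_left)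
  also have "\<dots> = real ((a + c + 1 + N) choose N)"
  proof -
    have "(-1::real)^N * (-1)^N = 1" by (simp flip: power_add)
    then show ?thesis
      by (simp only: of_nat_choose_eq_neg_gchoose[of "a + c + 1" N] mult.assoc[symmetric] mult_1)
  qed
  finally show ?thesis by (simp only: of_nat_eq_iff add_ac)
qed

lemma convolution_delay_left:
  fixes f g :: "nat \<Rightarrow> 'a :: semiring_0"
  shows "(\<Sum>k\<le>Suc N. (if k = 0 then 0 else f (k - 1)) * g (Suc N - k))
      = (\<Sum>k\<le>N. f k * g (N - k))"
  by (simp only: sum.atMost_Suc_shift) simp

lemma convolution_delay_right:
  fixes f g :: "nat \<Rightarrow> 'a :: semiring_0"
  shows "(\<Sum>k\<le>Suc N. f k * (if Suc N - k = 0 then 0 else g (Suc N - k - 1)))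
      = (\<Sum>k\<le>N. f k * g (N - k))"
  by (simp add: atMost_Suc Suc_diff_le)

definition diag_choose :: "nat \<Rightarrow> nat \<Rightarrow> int" where
  "diag_choose a k = int ((a + k) choose k)"

lemma Cb_eq_diag_choose:
  "Cb a k = diag_choose a k - (if k = 0 then 0 else diag_choose (Suc a) (k - 1))"
  by (cases k) (simp_all add: Cb_def diag_choose_def)

lemma convolution_diag_choose:
  "(\<Sum>k\<le>N. diag_choose a k * diag_choose c (N - k)) = int ((a + c + N + 1) choose N)"
proof -
  have "(\<Sum>k\<le>N. diag_choose a k * diag_choose c (N - k))
      = int (\<Sum>k\<le>N. ((a + k) choose k) * ((c + (N - k)) choose (N - k)))"
    by (simp add: diag_choose_def)
  then show ?thesis by (simp only: upper_vandermonde)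
qed

lemma convolution_Cb:
  "(\<Sum>k\<le>N. Cb a k * Cb c (N - k)) =
     int ((a + c + N + 1) choose N)
       - 2 * (if N \<ge> 1 then int ((a + c + N + 1) choose (N - 1)) else 0)
     + (if N \<ge> 2 then int ((a + c + N + 1) choose (N - 2)) else 0)"
proof -
  let ?D = diag_choose
  let ?Y = "\<lambda>a k. if k = 0 then 0 else ?D (Suc a) (k - 1)"
  have expand: "(\<Sum>k\<le>N. Cb a k * Cb c (N - k)) =
     (\<Sum>k\<le>N. ?D a k * ?D c (N - k)) - (\<Sum>k\<le>N. ?Y a k * ?D c (N - k))
     - (\<Sum>k\<le>N. ?D a k * ?Y c (N - k)) + (\<Sum>k\<le>N. ?Y a k * ?Y c (N - k))"
    by (simp add: Cb_eq_diag_choose algebra_simps sum.distrib sum_subtractf)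
  consider "N = 0" | "N = 1" | M where "N = Suc (Suc M)"
    by (metis One_nat_def not0_implies_Suc)
  then show ?thesis
  proof cases
    case 1
    then show ?thesis by (simp add: Cb_def)
  next
    case 2
    then show ?thesis by (simp add: Cb_def)
  next
    case 3
    have YD: "(\<Sum>k\<le>N. ?Y a k * ?D c (N - k)) = int ((a + c + N + 1) choose (N - 1))"
      using convolution_delay_left[where f = "?D (Suc a)" and g = "?D c" and N = "Suc M"]
      by (simp add: 3 convolution_diag_choose)
    have DY: "(\<Sum>k\<le>N. ?D a k * ?Y c (N - k)) = int ((a + c + N + 1) choose (N - 1))"
      using convolution_delay_right[where f = "?D a" and g = "?D (Suc c)" and N = "Suc M"]
      by (simp add: 3 convolution_diag_choose)
    have YY: "(\<Sum>k\<le>N. ?Y a k * ?Y c (N - k)) = int ((a + c + N + 1) choose (N - 2))"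
      using convolution_delay_left[where f = "?D (Suc a)" and g = "?Y c" and N = "Suc M"]
        convolution_delay_right[where f = "?D (Suc a)" and g = "?D (Suc c)" and N = M]
      by (simp add: 3 convolution_diag_choose)
    show ?thesis
      unfolding expand YD DY YY convolution_diag_choose using 3 by simp
  qed
qed

lemma pairs_sum_le_eq_Sigma:
  "{(d1 :: nat, d2). d1 + d2 \<le> n} = Sigma {..n} (\<lambda>d1. {..n - d1})"
  by auto

lemma sum_pairs_sum_le:
  "(\<Sum>(d1, d2) \<in> {(d1 :: nat, d2). d1 + d2 \<le> n}. f d1 d2)
    = (\<Sum>d1\<le>n. \<Sum>d2\<le>n - d1. f d1 d2)"
  unfolding pairs_sum_le_eq_Sigma by (simp add: sum.Sigma)

lemma sum_pairs_Cb:
  assumes "n \<ge> 1"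
  shows "(\<Sum>(d1, d2) \<in> {(d1 :: nat, d2). d1 + d2 \<le> n}. Cb (n - 1) d1 * Cb (n - 1) d2)
           = int ((3*n) choose n) - 2 * int ((3*n) choose (n - 1))
             + (if n \<ge> 2 then int ((3*n) choose (n - 2)) else 0)"
proof -
  have "(\<Sum>(d1, d2) \<in> {(d1, d2). d1 + d2 \<le> n}. Cb (n - 1) d1 * Cb (n - 1) d2)
      = (\<Sum>d1\<le>n. Cb (n - 1) d1 * (\<Sum>d2\<le>n - d1. Cb (n - 1) d2))"
    by (simp add: sum_pairs_sum_le sum_distrib_left)
  also have "\<dots> = (\<Sum>d1\<le>n. Cb (n - 1) d1 * Cb n (n - d1))"
    using assms by (simp add: sum_Cb_atMost)
  also have "\<dots> = int ((3*n) choose n) - 2 * int ((3*n) choose (n - 1))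
             + (if n \<ge> 2 then int ((3*n) choose (n - 2)) else 0)"
  proof -
    have e: "n - 1 + n + n + 1 = 3 * n" using assms by simp
    show ?thesis using convolution_Cb[of "n - 1" n n] assms unfolding e by simp
  qed
  finally show ?thesis .
qed

lemma card_pairs_sum_le:
  fixes f :: "'a \<Rightarrow> nat" and g :: "'b \<Rightarrow> nat"
  assumes "finite X" "finite Y"
  shows "card {(x, y). x \<in> X \<and> y \<in> Y \<and> f x + g y \<le> n}
     = (\<Sum>(d1, d2) \<in> {(d1, d2). d1 + d2 \<le> n}. card {x \<in> X. f x = d1}
       * card {y \<in> Y. g y = d2})"
proof -
  let ?D = "{(d1 :: nat, d2). d1 + d2 \<le> n}"
  have "finite ?D" unfolding pairs_sum_le_eq_Sigma by auto
  have split: "{(x, y). x \<in> X \<and> y \<in> Y \<and> f x + g y \<le> n}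
      = (\<Union>d\<in>?D. {x \<in> X. f x = fst d} \<times> {y \<in> Y. g y = snd d})"
    by auto
  have "card (\<Union>d\<in>?D. {x \<in> X. f x = fst d} \<times> {y \<in> Y. g y = snd d})
      = (\<Sum>d\<in>?D. card ({x \<in> X. f x = fst d} \<times> {y \<in> Y. g y = snd d}))"
    by (rule card_UN_disjoint) (use \<open>finite ?D\<close> assms in auto)
  then show ?thesis
    unfolding split by (simp add: card_cartesian_product case_prod_beta)
qed

lemma int_card_pairs_eq_sum_Cb:
  assumes "finite X" and count: "\<And>d. d \<le> n
      \<Longrightarrow> int (card {x \<in> X. f x = d}) = Cb (n - 1) d"
  shows "int (card {(x, y). x \<in> X \<and> y \<in> X \<and> f x + f y \<le> n})
           = (\<Sum>(d1, d2) \<in> {(d1, d2). d1 + d2 \<le> n}. Cb (n - 1) d1 * Cb (n - 1) d2)"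
  unfolding card_pairs_sum_le[OF assms(1,1)] of_nat_sum
  by (rule sum.cong) (auto simp: count)


section \<open>Binary trees by the position of their last node\<close>

fun grow_leaf :: "nat \<Rightarrow> unit tree \<Rightarrow> unit tree" where
  "grow_leaf i Leaf = Node Leaf () Leaf"
| "grow_leaf i (Node l u r) =
     (if i \<le> size l then Node (grow_leaf i l) u r else Node l u
       (grow_leaf (i - Suc (size l)) r))"

fun prune_last :: "unit tree \<Rightarrow> unit tree" where
  "prune_last Leaf = Leaf"
| "prune_last (Node l u r) =
     (if r \<noteq> Leaf then Node l u (prune_last r) else if l \<noteq> Leaf then Node
       (prune_last l) u Leaf else Leaf)"

lemma size_grow_leaf [simp]: "size (grow_leaf i t) = Suc (size t)"
  by (induction i t rule: grow_leaf.induct) auto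

lemma grow_leaf_neq_Leaf [simp]: "grow_leaf i t \<noteq> Leaf" "Leaf \<noteq> grow_leaf i t"
  by (cases t; simp)+

lemma dg_less_size: "t \<noteq> Leaf \<Longrightarrow> dg t < size t"
  by (induction t rule: dg.induct) (auto split: if_splits)

lemma dg_grow_leaf:
  "dg t \<le> i \<Longrightarrow> i \<le> size t \<Longrightarrow> dg (grow_leaf i t) = i"
proof (induction i t rule: grow_leaf.induct)
  case (1 i)
  then show ?case by simp
next
  case (2 i l u r)
  show ?case
  proof (cases "i \<le> size l")
    case True
    then have "r = Leaf" using "2.prems"(1) by (auto split: if_splits)
    then show ?thesis using 2 True by (cases "l = Leaf") auto
  next
    case False
    have "dg r \<le> i - Suc (size l)" using "2.prems"(1) False by (cases "r = Leaf") auto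
    then show ?thesis using "2.IH"(2)[OF False] "2.prems"(2) False by simp
  qed
qed

lemma size_prune_last: "size (prune_last t) = size t - 1"
  by (induction t rule: prune_last.induct) (auto simp flip: eq_size_0)

lemma grow_leaf_prune_last: "t \<noteq> Leaf \<Longrightarrow> grow_leaf (dg t) (prune_last t) = t"
proof (induction t rule: prune_last.induct)
  case (2 l u r)
  show ?case
  proof (cases "r = Leaf \<and> l \<noteq> Leaf")
    case True
    then have "dg l \<le> size (prune_last l)"
      using dg_less_size[of l] by (simp add: size_prune_last)
    then show ?thesis using 2 True by simp
  qed (use 2 in \<open>auto simp: size_prune_last\<close>)
qed simp

lemma dg_prune_last_le: "dg (prune_last t) \<le> dg t"
proof (induction t rule: prune_last.induct)
  case (2 l u r)
  have "dg l \<le> size l" by (cases "l = Leaf") (auto dest: dg_less_size)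
  then show ?case using 2 by auto
qed simp

lemma inj_grow_leaf: "inj (grow_leaf i)"
proof (rule injI)
  show "grow_leaf i t = grow_leaf i t' \<Longrightarrow> t = t'" for t t'
  proof (induction i t arbitrary: t' rule: grow_leaf.induct)
    case (1 i)
    then show ?case by (cases t') (auto split: if_splits)
  next
    case (2 i l u r)
    then show ?case by (cases t') (auto split: if_splits)
  qed
qed

lemma finite_trees_size: "finite {t :: unit tree. size t = n}"
proof -
  have "finite {t :: unit tree. size t \<le> n}"
  proof (induction n)
    case 0
    then show ?case by (simp add: eq_0_size)
  next
    case (Suc n)
    have "{t :: unit tree. size t \<le> Suc n}
        \<subseteq> insert Leaf ((\<lambda>(l, r). Node l () r) `
          ({t. size t \<le> n} \<times> {t. size t \<le> n}))"
    proof
      fix t :: "unit tree" assume "t \<in> {t. size t \<le> Suc n}"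
      then show "t \<in> insert Leaf
        ((\<lambda>(l, r). Node l () r) ` ({t. size t \<le> n} \<times> {t. size t \<le> n}))"
        by (cases t) force+
    qed
    then show ?case by (rule finite_subset) (use Suc in simp)
  qed
  then show ?thesis by (rule finite_subset[rotated]) auto
qed

definition count_trees_dg :: "nat \<Rightarrow> nat \<Rightarrow> nat" where
  "count_trees_dg n d = card {t :: unit tree. size t = n \<and> dg t = d}"

lemma trees_dg_Suc_eq_image:
  assumes "i \<le> n"
  shows "{t :: unit tree. size t = Suc n \<and> dg t = i}
      = grow_leaf i ` {t. size t = n \<and> dg t \<le> i}"
proof
  show "grow_leaf i ` {t. size t = n \<and> dg t \<le> i} \<subseteq>
    {t. size t = Suc n \<and> dg t = i}"
    using assms by (auto simp: dg_grow_leaf)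
next
  show "{t. size t = Suc n \<and> dg t = i} \<subseteq> grow_leaf i `
    {t. size t = n \<and> dg t \<le> i}"
  proof
    fix t :: "unit tree" assume t: "t \<in> {t. size t = Suc n \<and> dg t = i}"
    then have "t = grow_leaf i (prune_last t)" using grow_leaf_prune_last[of t] by fastforce
    moreover have "prune_last t \<in> {t. size t = n \<and> dg t \<le> i}"
      using t dg_prune_last_le[of t] by (simp add: size_prune_last)
    ultimately show "t \<in> grow_leaf i ` {t. size t = n \<and> dg t \<le> i}" by blast
  qed
qed

lemma count_trees_dg_Suc:
  "i \<le> n \<Longrightarrow> count_trees_dg (Suc n) i = (\<Sum>d\<le>i. count_trees_dg n d)"
proof -
  assume "i \<le> n"
  then have "count_trees_dg (Suc n) i = card {t :: unit tree. size t = n \<and> dg t \<le> i}"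
    unfolding count_trees_dg_def trees_dg_Suc_eq_image[OF \<open>i \<le> n\<close>]
    by (intro card_image inj_on_subset[OF inj_grow_leaf]) simp
  also have "{t :: unit tree. size t = n \<and> dg t \<le> i}
    = (\<Union>d\<in>{..i}. {t. size t = n \<and> dg t = d})"
    by auto
  also have "card \<dots> = (\<Sum>d\<le>i. count_trees_dg n d)"
    unfolding count_trees_dg_def
    by (rule card_UN_disjoint) (auto intro: finite_subset[OF _ finite_trees_size[of n]])
  finally show ?thesis .
qed

lemma count_trees_dg_Suc_gt: "i > n \<Longrightarrow> count_trees_dg (Suc n) i = 0"
proof -
  have "dg t < Suc n" if "size t = Suc n" for t :: "unit tree"
    using dg_less_size[of t] that by fastforce
  then show "i > n \<Longrightarrow> ?thesis" unfolding count_trees_dg_def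
    by (fastforce simp: card_eq_0_iff)
qed

lemma int_count_trees_dg: "d \<le> Suc n \<Longrightarrow> int (count_trees_dg (Suc n) d) = Cb n d"
proof (rule ballot_recurrence_eq_Cb)
  have "{t :: unit tree. t = Leaf \<and> dg t = 0} = {Leaf}" by auto
  then show "count_trees_dg 1 0 = 1"
    using count_trees_dg_Suc[of 0 0] by (simp add: count_trees_dg_def)
qed (simp_all add: count_trees_dg_Suc count_trees_dg_Suc_gt)

lemma int_card_tree_pairs:
  assumes "n \<ge> 1"
  shows "int (card {(T1 :: unit tree, T2 :: unit tree). size T1 = n \<and> size T2 = n
      \<and> dg T1 + dg T2 \<le> n})
     = (\<Sum>(d1, d2) \<in> {(d1, d2). d1 + d2 \<le> n}. Cb (n - 1) d1 * Cb (n - 1) d2)"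
proof -
  have "{(T1 :: unit tree, T2). size T1 = n \<and> size T2 = n \<and> dg T1 + dg T2 \<le> n}
      = {(x, y). x \<in> {t. size t = n} \<and> y \<in> {t. size t = n} \<and> dg x + dg y \<le> n}"
    by auto
  moreover have "int (card {t \<in> {t :: unit tree. size t = n}. dg t = d})
    = Cb (n - 1) d" if "d \<le> n" for d
    using int_count_trees_dg[of d "n - 1"] that assms by (simp add: count_trees_dg_def)
  ultimately show ?thesis
    using int_card_pairs_eq_sum_Cb[OF finite_trees_size] by presburger
qed

section \<open>Catalan sequences\<close>

definition catalan_seqs :: "nat \<Rightarrow> nat list set" where
  "catalan_seqs n = {p. length p = n \<and> (\<forall>k<n. p!k \<le> k)
    \<and> (\<forall>k. Suc k < n \<longrightarrow> p!k \<le> p!Suc k)}"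

definition dual_catalan_seqs :: "nat \<Rightarrow> nat list set" where
  "dual_catalan_seqs n =
     {m. length m = n \<and> (\<forall>j<n. m!j + j + 1 \<le> n)
       \<and> (\<forall>j. Suc j < n \<longrightarrow> m!j \<le> m!Suc j + 1)}"

definition from_dual :: "nat \<Rightarrow> nat list \<Rightarrow> nat list" where
  "from_dual n m = map (\<lambda>i. i - m!(n - 1 - i)) [0..<n]"

lemma finite_catalan_seqs: "finite (catalan_seqs n)"
proof (rule finite_subset)
  show "catalan_seqs n \<subseteq> {xs. set xs \<subseteq> {..n} \<and> length xs = n}"
    by (auto simp: catalan_seqs_def in_set_conv_nth) (metis le_trans less_imp_le_nat)
qed (simp add: finite_lists_length_eq)

lemma inj_on_from_dual: "inj_on (from_dual n) (dual_catalan_seqs n)"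
proof (rule inj_onI)
  fix m m' assume m: "m \<in> dual_catalan_seqs n" and m': "m' \<in> dual_catalan_seqs n"
    and eq: "from_dual n m = from_dual n m'"
  show "m = m'"
  proof (rule nth_equalityI)
    show "length m = length m'" using m m' by (simp add: dual_catalan_seqs_def)
    fix j assume "j < length m"
    then have j: "j < n" using m by (simp add: dual_catalan_seqs_def)
    have "from_dual n m ! (n - 1 - j) = from_dual n m' ! (n - 1 - j)" using eq by simp
    moreover have "m!j \<le> n - 1 - j" "m'!j \<le> n - 1 - j"
      using m m' j by (auto simp: dual_catalan_seqs_def)
    ultimately show "m!j = m'!j" using j by (simp add: from_dual_def)
  qed
qed

lemma from_dual_in_catalan_seqs:
  assumes "m \<in> dual_catalan_seqs n"
  shows "from_dual n m \<in> catalan_seqs n"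
proof -
  have bound: "\<And>j. j < n \<Longrightarrow> m!j + j + 1 \<le> n"
    and step: "\<And>j. Suc j < n \<Longrightarrow> m!j \<le> m!Suc j + 1"
    using assms by (auto simp: dual_catalan_seqs_def)
  have "k - m!(n - 1 - k) \<le> Suc k - m!(n - 1 - Suc k)" if k: "Suc k < n" for k
  proof -
    have "m!(n - 1 - Suc k) \<le> m!(n - 1 - k) + 1"
      using step[of "n - 1 - Suc k"] k by (simp add: Suc_diff_Suc)
    moreover have "m!(n - 1 - k) \<le> k" using bound[of "n - 1 - k"] k by simp
    ultimately show ?thesis by linarith
  qed
  then show ?thesis by (auto simp: catalan_seqs_def from_dual_def)
qed

lemma catalan_seqs_subset_from_dual: "catalan_seqs n \<subseteq> from_dual n ` dual_catalan_seqs n"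
proof
  fix q assume q: "q \<in> catalan_seqs n"
  have bound: "\<And>k. k < n \<Longrightarrow> q!k \<le> k" and mono: "\<And>k. Suc k < n
    \<Longrightarrow> q!k \<le> q!Suc k"
    and len: "length q = n"
    using q by (auto simp: catalan_seqs_def)
  define m where "m = map (\<lambda>j. (n - 1 - j) - q!(n - 1 - j)) [0..<n]"
  have "m!j \<le> m!Suc j + 1" if j: "Suc j < n" for j
  proof -
    have "q!(n - 1 - Suc j) \<le> q!(n - 1 - j)"
      using mono[of "n - 1 - Suc j"] j by (simp add: Suc_diff_Suc)
    moreover have "q!(n - 1 - j) \<le> n - 1 - j" using bound j by simp
    ultimately show ?thesis using j by (simp add: m_def)
  qed
  then have "m \<in> dual_catalan_seqs n" by (auto simp: dual_catalan_seqs_def m_def)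
  moreover have "from_dual n m = q"
  proof (rule nth_equalityI)
    show "length (from_dual n m) = length q" using len by (simp add: from_dual_def)
    fix i assume "i < length (from_dual n m)"
    then have "i < n" by (simp add: from_dual_def)
    then show "from_dual n m ! i = q!i" using bound[of i] by (simp add: from_dual_def m_def)
  qed
  ultimately show "q \<in> from_dual n ` dual_catalan_seqs n" by blast
qed

lemma from_dual_image: "from_dual n ` dual_catalan_seqs n = catalan_seqs n"
  using from_dual_in_catalan_seqs catalan_seqs_subset_from_dual by blast

lemma from_dual_last: "n \<ge> 1 \<Longrightarrow> from_dual n m ! (n - 1) = n - 1 - m!0"
  by (simp add: from_dual_def)

lemma dual_catalan_seqs_hd_bound:
  "m \<in> dual_catalan_seqs n \<Longrightarrow> n \<ge> 1 \<Longrightarrow> m!0 + 1 \<le> n"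
  unfolding dual_catalan_seqs_def by (auto dest!: spec[of _ 0])

definition count_catalan_last :: "nat \<Rightarrow> nat \<Rightarrow> nat" where
  "count_catalan_last n d = card {p \<in> catalan_seqs n. p!(n - 1) = d}"

lemma catalan_seqs_Suc_eq_image:
  assumes "n \<ge> 1" and "i \<le> n"
  shows "{p \<in> catalan_seqs (Suc n). p!n = i}
      = (\<lambda>p. p @ [i]) ` {p \<in> catalan_seqs n. p!(n - 1) \<le> i}"
proof
  show "(\<lambda>p. p @ [i]) ` {p \<in> catalan_seqs n. p!(n - 1) \<le> i} \<subseteq>
    {p \<in> catalan_seqs (Suc n). p!n = i}"
  proof clarify
    fix p assume p: "p \<in> catalan_seqs n" "p!(n - 1) \<le> i"
    then have len: "length p = n" by (simp add: catalan_seqs_def)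
    have "(p @ [i])!k \<le> (p @ [i])!Suc k" if "Suc k < Suc n" for k
    proof (cases "Suc k < n")
      case False
      then have "k = n - 1" using that assms(1) by simp
      then show ?thesis using p len assms(1) by (auto simp: nth_append)
    qed (use p len in \<open>auto simp: catalan_seqs_def nth_append\<close>)
    moreover have "(p @ [i])!k \<le> k" if "k < Suc n" for k
      using p len assms(2) that by (cases "k < n") (auto simp: catalan_seqs_def nth_append)
    ultimately show "p @ [i] \<in> catalan_seqs (Suc n) \<and> (p @ [i])!n = i"
      using len by (simp add: catalan_seqs_def nth_append)
  qed
next
  show "{p \<in> catalan_seqs (Suc n). p!n = i} \<subseteq> (\<lambda>p. p @ [i]) `
    {p \<in> catalan_seqs n. p!(n - 1) \<le> i}"
  proof
    fix x assume x: "x \<in> {p \<in> catalan_seqs (Suc n). p!n = i}"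
    then have len: "length x = Suc n" by (simp add: catalan_seqs_def)
    then have "x = take n x @ [i]" using take_Suc_conv_app_nth[of n x] x by simp
    moreover have "take n x \<in> catalan_seqs n" using x len by (auto simp: catalan_seqs_def)
    moreover have "x!(n - 1) \<le> x!Suc (n - 1)"
      using x assms(1) unfolding catalan_seqs_def by (auto dest!: spec[of _ "n - 1"])
    then have "take n x ! (n - 1) \<le> i" using x assms(1) by simp
    ultimately show "x \<in> (\<lambda>p. p @ [i]) ` {p \<in> catalan_seqs n. p!(n - 1) \<le> i}"
      by blast
  qed
qed

lemma count_catalan_last_Suc:
  assumes "n \<ge> 1" and "i \<le> n"
  shows "count_catalan_last (Suc n) i = (\<Sum>d\<le>i. count_catalan_last n d)"
proof -
  have "count_catalan_last (Suc n) i = card {p \<in> catalan_seqs n. p!(n - 1) \<le> i}"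
    unfolding count_catalan_last_def using catalan_seqs_Suc_eq_image[OF assms]
    by (simp add: card_image inj_on_def)
  also have "{p \<in> catalan_seqs n. p!(n - 1) \<le> i}
    = (\<Union>d\<in>{..i}. {p \<in> catalan_seqs n. p!(n - 1) = d})"
    by auto
  also have "card \<dots> = (\<Sum>d\<le>i. count_catalan_last n d)"
    unfolding count_catalan_last_def
    by (rule card_UN_disjoint) (auto intro: finite_subset[OF _ finite_catalan_seqs[of n]])
  finally show ?thesis .
qed

lemma count_catalan_last_Suc_gt:
  assumes "i > n"
  shows "count_catalan_last (Suc n) i = 0"
proof -
  have "{p \<in> catalan_seqs (Suc n). p!n = i} = {}"
    using assms by (fastforce simp: catalan_seqs_def)
  then show ?thesis unfolding count_catalan_last_def by (simp only: diff_Suc_1 card.empty)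
qed

lemma int_count_catalan_last:
  "d \<le> Suc n \<Longrightarrow> int (count_catalan_last (Suc n) d) = Cb n d"
proof (rule ballot_recurrence_eq_Cb)
  have "{p \<in> catalan_seqs 1. p ! 0 = 0} = {[0]}"
    by (auto simp: catalan_seqs_def length_Suc_conv)
  then show "count_catalan_last 1 0 = 1" by (simp add: count_catalan_last_def)
qed (simp_all add: count_catalan_last_Suc count_catalan_last_Suc_gt)

section \<open>Frontiers and sweeps\<close>

lemma pos_nth: "distinct xs \<Longrightarrow> i < length xs \<Longrightarrow> pos (xs!i) xs = i"
  unfolding pos_def
  by (rule Least_equality) (auto simp: nth_eq_iff_index_eq)

lemma pos_in_set: "x \<in> set xs \<Longrightarrow> pos x xs < length xs \<and> xs ! pos x xs = x"
  unfolding pos_def by (rule LeastI_ex) (auto simp: in_set_conv_nth)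

lemma pos_map: "distinct (map f xs) \<Longrightarrow> x \<in> set xs
  \<Longrightarrow> pos (f x) (map f xs) = pos x xs"
proof -
  assume d: "distinct (map f xs)" and x: "x \<in> set xs"
  have "pos x xs < length xs" "xs ! pos x xs = x" using pos_in_set[OF x] by auto
  then show ?thesis using pos_nth[OF d, of "pos x xs"] by simp
qed

lemma Min_pos_block:
  assumes "distinct (T @ C @ D)" "C \<noteq> []"
  shows "Min ((\<lambda>e. pos e (T @ C @ D)) ` set C) = length T"
proof -
  have "(\<lambda>e. pos e (T @ C @ D)) ` set C = (\<lambda>j. length T + j) ` {..<length C}"
  proof -
    have "pos (C!j) (T @ C @ D) = length T + j" if "j < length C" for j
      using pos_nth[OF assms(1), of "length T + j"] that by (simp add: nth_append)
    then show ?thesis by (force simp: in_set_conv_nth image_iff)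
  qed
  moreover have "Min ((\<lambda>j. length T + j) ` {..<length C}) = length T"
  proof (rule Min_eqI)
    show "length T \<in> (\<lambda>j. length T + j) ` {..<length C}" using assms(2) by force
  qed auto
  ultimately show ?thesis by simp
qed

lemma pos_replace_block:
  assumes S': "S' = take i S @ N @ drop (i + c) S" and d: "distinct S" "distinct S'"
    and ic: "i + c \<le> length S" and x: "x \<in> set S" and nb: "\<not>
        (i \<le> pos x S \<and> pos x S < i + c)"
  shows "x \<in> set S' \<and> pos x S' = (if pos x S < i then pos x S else pos x S + length N - c)"
proof -
  let ?p = "pos x S"
  have p: "?p < length S" "S ! ?p = x" using pos_in_set[OF x] by auto
  show ?thesis
  proof (cases "?p < i")
    case True
    have "S' ! ?p = x" using S' True p ic by (simp add: nth_append)
    moreover have "?p < length S'" using S' True ic by simp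
    ultimately show ?thesis using pos_nth[OF d(2), of ?p] True by (metis nth_mem)
  next
    case False
    then have ge: "i + c \<le> ?p" using nb by simp
    let ?r = "?p - (i + c)"
    let ?q = "(i + length N) + ?r"
    have li: "length (take i S @ N) = i + length N" using ic by simp
    have "S' ! ?q = drop (i + c) S ! ?r"
      unfolding S' append_assoc[symmetric] by (metis li nth_append_length_plus)
    also have "\<dots> = S ! ?p" using ic ge p by simp
    finally have e: "S' ! ?q = x" using p by simp
    moreover have "?q < length S'" using S' ge ic p by simp
    moreover have "?q = ?p + length N - c" using ge by simp
    ultimately show ?thesis using pos_nth[OF d(2), of ?q] False p by (metis nth_mem)
  qed
qed

lemma append_block_prefix:
  assumes "A @ X @ B = A' @ Y @ B'" and "length A' + length Y \<le> length A"
  shows "\<exists>M. A = A' @ Y @ M \<and> B' = M @ X @ B"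
proof -
  define M where "M = drop (length A' + length Y) A"
  have "take (length A' + length Y) (A @ X @ B) = take (length A' + length Y) (A' @ Y @ B')"
    using assms(1) by simp
  then have "take (length A' + length Y) A = A' @ Y" using assms(2) by simp
  then have "A = A' @ Y @ M" unfolding M_def by (metis append.assoc append_take_drop_id)
  then show ?thesis using assms(1) by auto
qed

lemma append_blocks_disjoint_cases:
  assumes eq: "A @ X @ B = A' @ Y @ B'" and disj: "set Y \<inter> set X = {}"
    and "X \<noteq> []" "Y \<noteq> []"
  shows "(\<exists>M. A = A' @ Y @ M \<and> B' = M @ X @ B)
      \<or> (\<exists>M. A' = A @ X @ M \<and> B = M @ Y @ B')"
proof -
  consider "length A' + length Y \<le> length A" | "length A + length X \<le> length A'"
    | "length A < length A' + length Y" "length A' < length A + length X"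
    by linarith
  then show ?thesis
  proof cases
    case 1
    then show ?thesis using append_block_prefix[OF eq] by blast
  next
    case 2
    then show ?thesis using append_block_prefix[OF eq[symmetric]] by blast
  next
    case 3
    let ?k = "max (length A) (length A')"
    have "(A @ X @ B) ! ?k = X ! (?k - length A)" "?k - length A < length X"
      using 3 \<open>X \<noteq> []\<close> by (auto simp: nth_append max_def)
    moreover have "(A' @ Y @ B') ! ?k = Y ! (?k - length A')" "?k - length A' < length Y"
      using 3 \<open>Y \<noteq> []\<close> by (auto simp: nth_append max_def)
    ultimately show ?thesis using eq disj by (metis disjoint_iff nth_mem)
  qed
qed

lemma sweeps_Cons_swap:
  assumes eq: "A @ outs cop E u @ B = A' @ ins cop E v @ B'"
    and disj: "set (ins cop E v) \<inter> set (outs cop E u) = {}"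
    and ne: "outs cop E u \<noteq> []" "ins cop E v \<noteq> []"
    and sw: "sweeps cop E (A' @ outs cop E v @ B') vs G"
  shows "\<exists>A'' B''. A @ ins cop E u @ B = A'' @ ins cop E v @ B''
           \<and> sweeps cop E (A'' @ outs cop E v @ B'') (u # vs) G"
  using append_blocks_disjoint_cases[OF eq disj ne]
proof
  assume "\<exists>M. A = A' @ ins cop E v @ M \<and> B' = M @ outs cop E u @ B"
  then obtain M where M: "A = A' @ ins cop E v @ M" "B' = M @ outs cop E u @ B" by blast
  have "sweeps cop E ((A' @ outs cop E v @ M) @ ins cop E u @ B) (u # vs) G"
    by (rule sweeps.sweeps_Cons) (use sw M in simp)
  then show ?thesis using M by (intro exI[of _ A'] exI[of _ "M @ ins cop E u @ B"]) simp
next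
  assume "\<exists>M. A' = A @ outs cop E u @ M \<and> B = M @ ins cop E v @ B'"
  then obtain M where M: "A' = A @ outs cop E u @ M" "B = M @ ins cop E v @ B'" by blast
  have "sweeps cop E (A @ ins cop E u @ (M @ outs cop E v @ B')) (u # vs) G"
    by (rule sweeps.sweeps_Cons) (use sw M in simp)
  then show ?thesis using M by (intro exI[of _ "A @ ins cop E u @ M"] exI[of _ B']) simp
qed

lemma sweeps_move_to_front:
  assumes "sweeps cop E F vs G"
    and wf: "\<And>u. u \<in> V
        \<Longrightarrow> ins cop E u \<noteq> [] \<and> outs cop E u \<noteq> []
        \<and> (\<forall>e\<in>set (outs cop E u). fst (fst e) = u)"
    and disj: "\<And>u w. u \<in> V \<Longrightarrow> w \<in> V \<Longrightarrow> u \<noteq> w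
        \<Longrightarrow> set (ins cop E u) \<inter> set (ins cop E w) = {}"
  shows "set vs \<subseteq> V \<Longrightarrow> v \<in> set vs \<Longrightarrow> distinct vs
      \<Longrightarrow> set (ins cop E v) \<subseteq> set F \<Longrightarrow>
         (\<forall>e\<in>set F. fst (fst e) \<notin> set vs) \<Longrightarrow>
         \<exists>A B. F = A @ ins cop E v @ B
           \<and> sweeps cop E (A @ outs cop E v @ B) (remove1 v vs) G"
  using assms(1)
proof (induction rule: sweeps.induct)
  case (sweeps_Cons A u B vs G)
  show ?case
  proof (cases "v = u")
    case False
    have uV: "u \<in> V" and vV: "v \<in> V" using sweeps_Cons.prems by auto
    have vs: "v \<in> set vs" "distinct vs" "u \<notin> set vs"
      using sweeps_Cons.prems False by auto
    have "set (ins cop E v) \<subseteq> set (A @ outs cop E u @ B)"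
      using sweeps_Cons.prems(4) disj[OF vV uV False] by auto
    moreover have "\<forall>e\<in>set (A @ outs cop E u @ B). fst (fst e) \<notin> set vs"
      using sweeps_Cons.prems(5) wf[OF uV] vs by auto
    ultimately obtain A' B' where eq: "A @ outs cop E u @ B = A' @ ins cop E v @ B'"
      and sw: "sweeps cop E (A' @ outs cop E v @ B') (remove1 v vs) G"
      using sweeps_Cons.IH vs sweeps_Cons.prems(1) by auto
    have "\<forall>e\<in>set (ins cop E v). fst (fst e) \<noteq> u"
      using sweeps_Cons.prems(4,5) by auto
    then have "set (ins cop E v) \<inter> set (outs cop E u) = {}" using wf[OF uV] by auto
    then show ?thesis
      using sweeps_Cons_swap[OF eq _ _ _ sw] wf uV vV False by auto
  qed (use sweeps_Cons in auto)
qed simp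

lemma sweeps_NilD: "sweeps cop E F [] G \<Longrightarrow> F = G"
  by (erule sweeps.cases) auto

abbreviation (input) coprods_first :: "nat \<Rightarrow> nat \<Rightarrow> bool" where
  "coprods_first n \<equiv> \<lambda>v. v \<le> n"

definition in_arity :: "nat \<Rightarrow> nat \<Rightarrow> nat" where
  "in_arity n v = (if v \<le> n then 1 else 2)"

definition in_slots :: "nat \<Rightarrow> nat \<Rightarrow> slot list" where
  "in_slots n v = map (\<lambda>j. (v, j)) [0..<in_arity n v]"

definition out_slots :: "nat \<Rightarrow> nat \<Rightarrow> slot list" where
  "out_slots n v = (if v \<le> n then [(v, 0), (v, 1)] else [(v, 0)])"

lemma in_arity_pos: "in_arity n v \<ge> 1"
  by (simp add: in_arity_def)

lemma in_arity_le: "v \<le> n \<Longrightarrow> in_arity n v = 1"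
  and in_arity_gt: "\<not> v \<le> n \<Longrightarrow> in_arity n v = 2"
  by (simp_all add: in_arity_def)

lemma set_out_slots: "set (out_slots n v) = {(v, i) | i. if v \<le> n then i < 2 else i = 0}"
  by (auto simp: out_slots_def)

lemma length_out_slots: "length (out_slots n v) = 3 - in_arity n v"
  by (simp add: out_slots_def in_arity_def)

lemma distinct_out_slots: "distinct (out_slots n v)"
  by (simp add: out_slots_def)

lemma card_coprods: "card {v \<in> verts n. v \<le> n} = n"
proof -
  have "{v \<in> verts n. v \<le> n} = {1..n}" by (auto simp: verts_def)
  then show ?thesis by simp
qed

lemma inSlot_operator:
  "1 \<le> v \<Longrightarrow> v \<le> 2*n \<Longrightarrow> j < in_arity n v
    \<Longrightarrow> inSlot n (coprods_first n) (v, j)"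
  by (auto simp: inSlot_def verts_def in_arity_def)

lemma outSlot_operator:
  "1 \<le> v \<Longrightarrow> v \<le> 2*n \<Longrightarrow> i < 3 - in_arity n v
    \<Longrightarrow> outSlot n (coprods_first n) (v, i)"
  by (auto simp: outSlot_def verts_def in_arity_def)

lemma ins_eq_map: "ins (coprods_first n) E v = map (inEdge E v) [0..<in_arity n v]"
  by (simp add: ins_def in_arity_def numeral_2_eq_2 upt_rec)

lemma outs_eq_map: "outs (coprods_first n) E v = map (outEdge E v) [0..<3 - in_arity n v]"
  by (simp add: outs_def in_arity_def numeral_2_eq_2 upt_rec)

lemma length_ins: "length (ins (coprods_first n) E v) = in_arity n v"
  by (simp add: ins_eq_map)

lemma length_outs: "length (outs (coprods_first n) E v) = 3 - in_arity n v"
  by (simp add: outs_eq_map)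


section \<open>The prograph of a position sequence\<close>

text \<open>A position sequence \<open>ps\<close> records, for the operator labelled
  \<open>k + 1\<close>, the frontier position \<open>ps!k\<close> of its leftmost incoming edge.
  Frontier edges are identified with the output slots they leave from, so the frontier after
  \<open>k\<close> steps is \<open>slot_frontier n ps k\<close>; the second condition of
  \<open>pos_seqs\<close> is what the leftmost choice of the canonical labelling imposes on
  consecutive steps.\<close>

fun slot_frontier :: "nat \<Rightarrow> nat list \<Rightarrow> nat \<Rightarrow> slot list" where
  "slot_frontier n ps 0 = [(0, 0)]"
| "slot_frontier n ps (Suc k) =
     take (ps!k) (slot_frontier n ps k) @ out_slots n (Suc k)
     @ drop (ps!k + in_arity n (Suc k)) (slot_frontier n ps k)"

definition frontier_length :: "nat \<Rightarrow> nat \<Rightarrow> nat" where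
  "frontier_length n k = (if k \<le> n then Suc k else 2*n + 1 - k)"

definition pos_seqs :: "nat \<Rightarrow> nat list set" where
  "pos_seqs n = {ps. length ps = 2*n
     \<and> (\<forall>k<2*n. ps!k + in_arity n (Suc k) \<le> frontier_length n k)
     \<and> (\<forall>k. Suc k < 2*n
       \<longrightarrow> ps!k + 1 \<le> ps!(Suc k) + in_arity n (Suc (Suc k)))}"

definition source :: "nat \<Rightarrow> nat list \<Rightarrow> slot \<Rightarrow> slot" where
  "source n ps s = (if fst s = 0 then hd (slot_frontier n ps (2*n))
     else slot_frontier n ps (fst s - 1) ! (ps!(fst s - 1) + snd s))"

definition prograph_of :: "nat \<Rightarrow> nat list \<Rightarrow> pedge set" where
  "prograph_of n ps = (\<lambda>s. (source n ps s, s)) ` {s. inSlot n (coprods_first n) s}"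

definition sources :: "nat \<Rightarrow> nat list \<Rightarrow> nat \<Rightarrow> slot list" where
  "sources n ps v = map (\<lambda>j. source n ps (v, j)) [0..<in_arity n v]"

definition slots_upto :: "nat \<Rightarrow> nat \<Rightarrow> slot set" where
  "slots_upto n k = {(0, 0)} \<union>
    {(v, i). 1 \<le> v \<and> v \<le> k \<and> (if v \<le> n then i < 2 else i = 0)}"

definition positions_of :: "nat \<Rightarrow> pedge set \<Rightarrow> nat list" where
  "positions_of n E =
     map (\<lambda>k. leftpos (coprods_first n) E (frontier (coprods_first n) E k) (Suc k))
       [0..<2*n]"

definition in_slot_list :: "nat \<Rightarrow> slot list" where
  "in_slot_list n = concat (map (in_slots n) [1..<Suc (2*n)]) @ [(0, 0)]"

locale pos_seq =
  fixes n :: nat and ps :: "nat list"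
  assumes n_pos: "n \<ge> 1" and ps_in: "ps \<in> pos_seqs n"
begin

abbreviation "cop \<equiv> coprods_first n"
abbreviation "G \<equiv> prograph_of n ps"

lemma length_ps: "length ps = 2*n"
  using ps_in by (simp add: pos_seqs_def)

lemma ps_fits: "k < 2*n \<Longrightarrow> ps!k + in_arity n (Suc k) \<le> frontier_length n k"
  using ps_in by (simp add: pos_seqs_def)

lemma ps_step: "Suc k < 2*n \<Longrightarrow> ps!k + 1 \<le> ps!(Suc k) + in_arity n (Suc (Suc k))"
  using ps_in by (simp add: pos_seqs_def)

lemma length_slot_frontier:
  "k \<le> 2*n \<Longrightarrow> length (slot_frontier n ps k) = frontier_length n k"
proof (induction k)
  case 0
  then show ?case by (simp add: frontier_length_def)
next
  case (Suc k)
  have b: "ps!k + in_arity n (Suc k) \<le> length (slot_frontier n ps k)"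
    using ps_fits[of k] Suc by simp
  have "length (slot_frontier n ps (Suc k))
    = length (slot_frontier n ps k) + 3 - 2 * in_arity n (Suc k)"
    using b by (simp add: length_out_slots in_arity_def split: if_splits)
  then show ?case using Suc by (simp add: frontier_length_def in_arity_def split: if_splits)
qed

lemma ps_fits_slot_frontier:
  "k < 2*n \<Longrightarrow> ps!k + in_arity n (Suc k) \<le> length (slot_frontier n ps k)"
  using ps_fits length_slot_frontier by simp

lemma sources_eq: "k < 2*n
  \<Longrightarrow> sources n ps (Suc k)
  = take (in_arity n (Suc k)) (drop (ps!k) (slot_frontier n ps k))"
proof -
  assume k: "k < 2*n"
  have b: "ps!k + in_arity n (Suc k) \<le> length (slot_frontier n ps k)"
    using ps_fits_slot_frontier k .
  show ?thesis
    unfolding sources_def source_def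
    by (rule nth_equalityI) (use b in auto)
qed

lemma slot_frontier_split:
  "k < 2*n \<Longrightarrow> slot_frontier n ps k =
    take (ps!k) (slot_frontier n ps k) @ sources n ps (Suc k)
    @ drop (ps!k + in_arity n (Suc k)) (slot_frontier n ps k)"
  by (simp add: sources_eq) (metis append_take_drop_id add.commute drop_drop)

text \<open>Every output slot created so far is consumed by exactly one operator or still lies
  in the frontier; at the end this makes \<open>source\<close> a bijection from input onto output
  slots.\<close>

lemma sources_slot_frontier_partition:
  "k \<le> 2*n \<Longrightarrow>
    distinct (concat (map (sources n ps) [1..<Suc k]) @ slot_frontier n ps k) \<and>
    set (concat (map (sources n ps) [1..<Suc k]) @ slot_frontier n ps k) = slots_upto n k"
proof (induction k)
  case 0
  then show ?case by (auto simp: slots_upto_def)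
next
  case (Suc k)
  let ?consumed = "concat (map (sources n ps) [1..<Suc k])"
  let ?S = "slot_frontier n ps k"
  let ?T = "take (ps!k) ?S" and ?C = "sources n ps (Suc k)"
    and ?D = "drop (ps!k + in_arity n (Suc k)) ?S"
  have k: "k < 2*n" using Suc by simp
  have sp: "?S = ?T @ ?C @ ?D" by (rule slot_frontier_split[OF k])
  have IH: "distinct (?consumed @ ?T @ ?C @ ?D)" "set (?consumed @ ?T @ ?C @ ?D) = slots_upto n k"
    using Suc.IH Suc.prems sp by (metis Suc_leD)+
  have nd: "set (out_slots n (Suc k)) \<inter> slots_upto n k = {}"
    by (auto simp: set_out_slots slots_upto_def)
  have cr: "slots_upto n (Suc k) = slots_upto n k \<union> set (out_slots n (Suc k))"
    by (auto simp: set_out_slots slots_upto_def)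
  have e1: "concat (map (sources n ps) [1..<Suc (Suc k)]) @ slot_frontier n ps (Suc k) =
      ?consumed @ ?C @ ?T @ out_slots n (Suc k) @ ?D"
    by simp
  show ?case unfolding e1
    using IH nd cr distinct_out_slots[of n "Suc k"] by auto
qed

lemma slot_frontier_final: "slot_frontier n ps (2*n) = [source n ps (0,0)]"
proof -
  have "length (slot_frontier n ps (2*n)) = 1"
    using length_slot_frontier[of "2*n"] n_pos frontier_length_def by simp
  then obtain x where "slot_frontier n ps (2*n) = [x]"
    by (metis One_nat_def length_0_conv length_Suc_conv)
  then show ?thesis by (simp add: source_def)
qed


lemma set_in_slot_list: "set (in_slot_list n) = {s. inSlot n cop s}"
proof -
  have "set (in_slot_list n)
    = {(0,0)} \<union> {(v, j). 1 \<le> v \<and> v \<le> 2*n \<and> j < in_arity n v}"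
    by (auto simp: in_slot_list_def in_slots_def)
  also have "\<dots> = {s. inSlot n cop s}"
    by (auto simp: inSlot_def verts_def in_arity_def)
  finally show ?thesis .
qed

lemma map_source_in_slot_list: "map (source n ps) (in_slot_list n)
  = concat (map (sources n ps) [1..<Suc (2*n)]) @ slot_frontier n ps (2*n)"
  by (simp add: in_slot_list_def slot_frontier_final map_concat sources_def[abs_def] in_slots_def
    comp_def)

lemma inj_on_source: "inj_on (source n ps) {s. inSlot n cop s}"
proof -
  have "distinct (map (source n ps) (in_slot_list n))" unfolding map_source_in_slot_list
    using sources_slot_frontier_partition[of "2*n"] by simp
  then show ?thesis using set_in_slot_list by (metis distinct_map)
qed

lemma slots_upto_final: "slots_upto n (2*n) = {s. outSlot n cop s}"
  by (auto simp: slots_upto_def outSlot_def verts_def split: if_splits)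

lemma source_image: "source n ps ` {s. inSlot n cop s} = {s. outSlot n cop s}"
proof -
  have "set (map (source n ps) (in_slot_list n)) = slots_upto n (2*n)"
    unfolding map_source_in_slot_list
    using sources_slot_frontier_partition[of "2*n"] by simp
  then show ?thesis using set_in_slot_list slots_upto_final by simp
qed

lemma source_in_slot_frontier: "1 \<le> v \<Longrightarrow> v \<le> 2*n
  \<Longrightarrow> j < in_arity n v
  \<Longrightarrow> source n ps (v, j) \<in> set (slot_frontier n ps (v - 1))"
proof -
  assume a: "1 \<le> v" "v \<le> 2*n" "j < in_arity n v"
  have "ps!(v-1) + in_arity n (Suc (v-1)) \<le> length (slot_frontier n ps (v-1))"
    using ps_fits_slot_frontier[of "v-1"] a by simp
  then show ?thesis using a by (simp add: source_def)
qed

lemma slot_frontier_subset: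
  "k \<le> 2*n \<Longrightarrow> set (slot_frontier n ps k) \<subseteq> slots_upto n k"
  using sources_slot_frontier_partition by auto

lemma fst_source_less: "1 \<le> v \<Longrightarrow> v \<le> 2*n \<Longrightarrow> j < in_arity n v
  \<Longrightarrow> fst (source n ps (v, j)) < v"
proof -
  assume a: "1 \<le> v" "v \<le> 2*n" "j < in_arity n v"
  have "v - 1 \<le> 2*n" using a by simp
  then have "source n ps (v, j) \<in> slots_upto n (v - 1)"
    using source_in_slot_frontier[OF a] slot_frontier_subset[of "v-1"] by blast
  then show ?thesis using a by (auto simp: slots_upto_def)
qed

lemma ps_0: "ps!0 = 0" using ps_fits[of 0] n_pos by (simp add: frontier_length_def in_arity_def)

lemma source_1_0: "source n ps (1, 0) = (0, 0)" by (simp add: source_def ps_0)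

lemma source_0_0: "source n ps (0, 0) = (2*n, 0)"
proof -
  obtain m where m: "2*n = Suc m" using n_pos by (cases "2*n") auto
  have len: "length (slot_frontier n ps m) = 2" using length_slot_frontier[of m] m n_pos
    by (simp add: frontier_length_def split: if_splits; arith)
  have b: "ps!m + 2 \<le> 2"
    using ps_fits_slot_frontier[of m] m len n_pos by (simp add: in_arity_def)
  have "slot_frontier n ps (Suc m) = [(Suc m, 0)]"
    using b len m n_pos by (simp add: out_slots_def in_arity_def)
  then show ?thesis using slot_frontier_final m by simp
qed
definition out_edge :: "slot \<Rightarrow> pedge" where "out_edge s
  = outEdge (prograph_of n ps) (fst s) (snd s)"

lemma mem_G:
  "e \<in> G \<longleftrightarrow> inSlot n cop (snd e) \<and> fst e = source n ps (snd e)"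
  by (cases e) (auto simp: prograph_of_def)

lemma inEdge_G: "inSlot n cop (v, j) \<Longrightarrow> inEdge G v j = (source n ps (v, j), (v, j))"
  unfolding inEdge_def by (rule the_equality) (auto simp: mem_G)

lemma out_edge_source:
  "inSlot n cop t \<Longrightarrow> out_edge (source n ps t) = (source n ps t, t)"
  unfolding out_edge_def outEdge_def
proof (rule the_equality)
  assume t: "inSlot n cop t"
  show "(source n ps t, t) \<in> G
    \<and> fst (source n ps t, t) = (fst (source n ps t), snd (source n ps t))"
    using t by (simp add: mem_G)
  fix e assume e: "e \<in> G \<and> fst e = (fst (source n ps t), snd (source n ps t))"
  then have "inSlot n cop (snd e)" "source n ps (snd e) = source n ps t" by (auto simp: mem_G)
  then have "snd e = t" using inj_onD[OF inj_on_source] t by blast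
  then show "e = (source n ps t, t)" using e by (metis mem_G prod.collapse)
qed

lemma outSlot_eq_source:
  "outSlot n cop s \<Longrightarrow> \<exists>t. inSlot n cop t \<and> source n ps t = s"
  using source_image by (metis (mono_tags, lifting) image_iff mem_Collect_eq)

lemma fst_out_edge: "outSlot n cop s \<Longrightarrow> fst (out_edge s) = s"
  by (metis fst_conv out_edge_source outSlot_eq_source)

lemma out_edge_inj: "outSlot n cop s \<Longrightarrow> outSlot n cop s'
  \<Longrightarrow> out_edge s = out_edge s' \<Longrightarrow> s = s'"
  using fst_out_edge by metis

lemma outSlot_slot_frontier: "k \<le> 2*n \<Longrightarrow> x \<in> set (slot_frontier n ps k)
  \<Longrightarrow> outSlot n cop x"
proof -
  assume k: "k \<le> 2*n" and x: "x \<in> set (slot_frontier n ps k)"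
  have "x \<in> slots_upto n k" using slot_frontier_subset[OF k] x by auto
  then have "x \<in> slots_upto n (2*n)" using k by (auto simp: slots_upto_def)
  then show ?thesis using slots_upto_final by auto
qed

lemma distinct_slot_frontier: "k \<le> 2*n \<Longrightarrow> distinct (slot_frontier n ps k)"
  using sources_slot_frontier_partition by auto

lemma distinct_map_out_edge:
  "k \<le> 2*n \<Longrightarrow> distinct (map out_edge (slot_frontier n ps k))"
  using distinct_slot_frontier outSlot_slot_frontier out_edge_inj
    by (simp add: distinct_map inj_on_def)

lemma ins_G: "1 \<le> v \<Longrightarrow> v \<le> 2*n
  \<Longrightarrow> ins cop G v = map out_edge (sources n ps v)"
proof -
  assume v: "1 \<le> v" "v \<le> 2*n"
  have e: "inEdge G v j = out_edge (source n ps (v, j))" if "j < in_arity n v" for j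
    using inEdge_G[OF inSlot_operator[OF v that]] out_edge_source[OF inSlot_operator[OF v that]]
      by simp
  show ?thesis
  proof (cases "v \<le> n")
    case True
    then show ?thesis using e[of 0] by (simp add: ins_def sources_def in_arity_def)
  next
    case False
    then show ?thesis using e[of 0] e[of 1]
      by (simp add: ins_def sources_def in_arity_def numeral_2_eq_2 upt_rec)
  qed
qed

lemma outs_G: "outs cop G v = map out_edge (out_slots n v)"
  by (simp add: outs_def out_slots_def out_edge_def)

lemma sources_ne: "sources n ps v \<noteq> []" using in_arity_pos[of n v] by (simp add: sources_def)

abbreviation "frontier_left k \<equiv> map out_edge (take (ps!k) (slot_frontier n ps k))"
abbreviation "frontier_right k \<equiv>
  map out_edge (drop (ps!k + in_arity n (Suc k)) (slot_frontier n ps k))"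

lemma frontier_step_parts:
  assumes k: "k < 2*n"
  shows "map out_edge (slot_frontier n ps k) = frontier_left k @ ins cop G (Suc k) @ frontier_right k"
    and "map out_edge (slot_frontier n ps (Suc k)) =
      frontier_left k @ outs cop G (Suc k) @ frontier_right k"
proof -
  have "ins cop G (Suc k) = map out_edge (sources n ps (Suc k))" using ins_G[of "Suc k"] k by simp
  then show "map out_edge (slot_frontier n ps k) =
      frontier_left k @ ins cop G (Suc k) @ frontier_right k"
    using slot_frontier_split[OF k] by (metis map_append)
  show "map out_edge (slot_frontier n ps (Suc k)) =
      frontier_left k @ outs cop G (Suc k) @ frontier_right k"
    by (simp add: outs_G)
qed

lemma globalIn_G: "globalIn G = out_edge (0,0)" by (simp add: globalIn_def out_edge_def)

lemma inSlot_0_0: "inSlot n cop (0,0)" by (simp add: inSlot_def)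
lemma inSlot_1_0: "inSlot n cop (1,0)" using n_pos by (simp add: inSlot_def verts_def)

lemma globalIn_G_eq: "globalIn G = ((0,0),(1,0))"
  using out_edge_source[OF inSlot_1_0] source_1_0 globalIn_G by simp

lemma globalOut_G_eq: "globalOut G = ((2*n,0),(0,0))"
  using inEdge_G[OF inSlot_0_0] source_0_0 by (simp add: globalOut_def)

lemma globalOut_G: "globalOut G = out_edge (source n ps (0,0))"
  using inEdge_G[OF inSlot_0_0] out_edge_source[OF inSlot_0_0] by (simp add: globalOut_def)

lemma frontier_G:
  "k \<le> 2*n \<Longrightarrow> frontier cop G k = map out_edge (slot_frontier n ps k)"
proof (induction k)
  case 0
  then show ?case by (simp add: globalIn_G)
next
  case (Suc k)
  let ?T = "frontier_left k" and ?C = "ins cop G (Suc k)" and ?D = "frontier_right k"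
  have k: "k < 2*n" using Suc by simp
  have F: "frontier cop G k = ?T @ ?C @ ?D" using Suc frontier_step_parts(1)[OF k] by simp
  have d: "distinct (?T @ ?C @ ?D)"
    using distinct_map_out_edge[of k] k frontier_step_parts(1)[OF k] by simp
  have Cne: "?C \<noteq> []" using ins_G[of "Suc k"] k sources_ne by simp
  have lenT: "length ?T = ps!k" using ps_fits_slot_frontier[OF k] by simp
  have lenC: "length ?C = in_arity n (Suc k)" using ins_G[of "Suc k"] k by (simp add: sources_def)
  have "frontier cop G (Suc k) = ?T @ outs cop G (Suc k) @ ?D"
    using Min_pos_block[OF d Cne] lenT lenC F by (simp add: frontier_step_def Let_def)
  then show ?case using frontier_step_parts(2)[OF k] by simp
qed

lemma outSlot_source: "inSlot n cop t \<Longrightarrow> outSlot n cop (source n ps t)"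
  using source_image by blast

lemma adj_G_less: "(u, w) \<in> adj n G \<Longrightarrow> u < w"
proof -
  assume "(u, w) \<in> adj n G"
  then obtain e where e: "e \<in> G" "u = fst (fst e)" "w = fst (snd e)" "w \<in> verts n"
    by (auto simp: adj_def)
  obtain t where t: "inSlot n cop t" "e = (source n ps t, t)"
    using e(1) mem_G by (metis prod.collapse)
  have wt: "w = fst t" using e(3) t(2) by simp
  have "1 \<le> fst t" "fst t \<le> 2*n" "snd t < in_arity n (fst t)"
    using t(1) e(4) wt by (auto simp: inSlot_def verts_def in_arity_def split: if_splits)
  then have "fst (source n ps (fst t, snd t)) < fst t" using fst_source_less by blast
  then show ?thesis using e t by simp
qed

lemma connected_from_1:
  "w \<in> verts n \<Longrightarrow> (1, w) \<in> (adj n G \<union> (adj n G)\<inverse>)\<^sup>*"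
proof (induction w rule: less_induct)
  case (less w)
  show ?case
  proof (cases "w = 1")
    case True
    then show ?thesis by simp
  next
    case False
    then have w: "2 \<le> w" "w \<le> 2*n" using less.prems by (auto simp: verts_def)
    have tin: "inSlot n cop (w, 0)" using w by (auto simp: inSlot_def verts_def)
    let ?s = "source n ps (w, 0)"
    have ne: "?s \<noteq> (0,0)"
      using inj_onD[OF inj_on_source, of "(w,0)" "(1,0)"] tin inSlot_1_0 source_1_0 w by auto
    have os: "outSlot n cop ?s" using outSlot_source[OF tin] .
    have u: "fst ?s \<in> verts n" using os ne by (auto simp: outSlot_def) (metis prod.collapse)
    have lt: "fst ?s < w" using fst_source_less[of w 0] w in_arity_pos[of n w] by simp
    have mem: "(?s, (w, 0)) \<in> G" using tin by (simp add: mem_G)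
    have "\<exists>e. (fst ?s, w) = (fst (fst e), fst (snd e)) \<and> e \<in> G
      \<and> fst (fst e) \<in> verts n \<and> fst (snd e) \<in> verts n"
      by (intro exI[of _ "(?s, (w, 0))"]) (use mem u less.prems in simp)
    then have "(fst ?s, w) \<in> adj n G" unfolding adj_def by blast
    moreover have "(1, fst ?s) \<in> (adj n G \<union> (adj n G)\<inverse>)\<^sup>*"
      using less.IH[OF lt u] .
    ultimately show ?thesis by (meson UnI1 rtrancl.rtrancl_into_rtrancl)
  qed
qed

lemma connected_G: "u \<in> verts n \<Longrightarrow> w \<in> verts n
  \<Longrightarrow> (u, w) \<in> (adj n G \<union> (adj n G)\<inverse>)\<^sup>*"
proof -
  assume u: "u \<in> verts n" and w: "w \<in> verts n"
  let ?R = "adj n G \<union> (adj n G)\<inverse>"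
  have "(1, u) \<in> ?R\<^sup>*" using connected_from_1[OF u] .
  then have "(u, 1) \<in> (?R\<inverse>)\<^sup>*" by (rule rtrancl_converseI)
  moreover have "?R\<inverse> = ?R" by auto
  ultimately have "(u, 1) \<in> ?R\<^sup>*" by simp
  then show ?thesis using connected_from_1[OF w] by (rule rtrancl_trans)
qed

lemma sweeps_G: "k \<le> 2*n
  \<Longrightarrow> sweeps cop G (map out_edge (slot_frontier n ps k)) [Suc k..<Suc (2*n)]
  (map out_edge (slot_frontier n ps (2*n)))"
proof (induction "2*n - k" arbitrary: k)
  case 0
  then have "k = 2*n" by simp
  then show ?case by (simp add: sweeps.sweeps_Nil)
next
  case (Suc d)
  then have k: "k < 2*n" by simp
  have dk: "d = 2*n - Suc k" using Suc.hyps(2) by simp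
  have IH: "sweeps cop G (map out_edge (slot_frontier n ps (Suc k))) [Suc (Suc k)..<Suc (2*n)]
    (map out_edge (slot_frontier n ps (2*n)))"
    using Suc.hyps(1)[OF dk] k by simp
  have e: "[Suc k..<Suc (2*n)] = Suc k # [Suc (Suc k)..<Suc (2*n)]" using k by (simp add: upt_rec)
  show ?case unfolding e frontier_step_parts(1)[OF k]
    by (rule sweeps.sweeps_Cons) (use IH[unfolded frontier_step_parts(2)[OF k]] in assumption)
qed

lemma upward_planar_G: "upward_planar n cop G"
proof -
  have "sweeps cop G (map out_edge (slot_frontier n ps 0)) [Suc 0..<Suc (2*n)]
    (map out_edge (slot_frontier n ps (2*n)))"
    using sweeps_G[of 0] by simp
  then have "sweeps cop G [globalIn G] [1..<Suc (2*n)] [globalOut G]"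
    using slot_frontier_final globalOut_G by (simp add: globalIn_G)
  moreover have "set [1..<Suc (2*n)] = verts n" by (auto simp: verts_def)
  ultimately show ?thesis unfolding upward_planar_def by (intro exI[of _ "[1..<Suc (2*n)]"]) simp
qed

lemma ex1_edge_from: "outSlot n cop s \<Longrightarrow> \<exists>!e. e \<in> G \<and> fst e = s"
proof -
  assume "outSlot n cop s"
  then obtain t where t: "inSlot n cop t" "source n ps t = s" using outSlot_eq_source by blast
  show "\<exists>!e. e \<in> G \<and> fst e = s"
  proof (rule ex1I[of _ "(s, t)"])
    show "(s, t) \<in> G \<and> fst (s, t) = s" using t by (simp add: mem_G)
    fix e assume e: "e \<in> G \<and> fst e = s"
    then have "inSlot n cop (snd e)" "source n ps (snd e) = source n ps t"
      using t by (auto simp: mem_G)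
    then have "snd e = t" using inj_onD[OF inj_on_source, of "snd e" t] t by simp
    then show "e = (s, t)" using e by (metis prod.collapse)
  qed
qed

lemma ex1_edge_into: "inSlot n cop s \<Longrightarrow> \<exists>!e. e \<in> G \<and> snd e = s"
  by (rule ex1I[of _ "(source n ps s, s)"]) (auto simp: mem_G)

lemma is_PC_prograph_G: "is_PC_prograph n cop G"
proof -
  have "\<forall>e\<in>G. outSlot n cop (fst e) \<and> inSlot n cop (snd e)"
    using mem_G outSlot_source by auto
  moreover have "fst (snd (globalIn G)) \<in> verts n \<and> fst (snd (globalIn G)) \<le> n"
    and "fst (fst (globalOut G)) \<in> verts n \<and> \<not> fst (fst (globalOut G)) \<le> n"
    using n_pos by (simp_all add: globalIn_G_eq globalOut_G_eq verts_def)
  moreover have "acyclic (adj n G)"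
    by (rule acyclicI_order[where f = "\<lambda>v. - int v"]) (simp add: adj_G_less)
  ultimately show ?thesis
    unfolding is_PC_prograph_def
    using card_coprods ex1_edge_from ex1_edge_into connected_G upward_planar_G by simp
qed

abbreviation "src w j \<equiv> source n ps (w, j)"
abbreviation "fpos m x \<equiv> pos x (slot_frontier n ps m)"

lemma src_notin_sources:
  assumes "Suc m \<noteq> w" "m < 2*n" "1 \<le> w" "w \<le> 2*n" "j < in_arity n w"
  shows "src w j \<notin> set (sources n ps (Suc m))"
proof
  assume "src w j \<in> set (sources n ps (Suc m))"
  then obtain j' where j': "j' < in_arity n (Suc m)" "src w j = src (Suc m) j'"
    by (auto simp: sources_def)
  have "(w, j) = (Suc m, j')"
    using inj_onD[OF inj_on_source j'(2)] inSlot_operator assms j' by simp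
  then show False using assms by simp
qed

lemma fpos_notin_block:
  assumes m: "m < 2*n" and x: "x \<in> set (slot_frontier n ps m)" and nc: "x \<notin> set
      (sources n ps (Suc m))"
  shows "\<not> (ps!m \<le> fpos m x \<and> fpos m x < ps!m + in_arity n (Suc m))"
proof
  assume h: "ps!m \<le> fpos m x \<and> fpos m x < ps!m + in_arity n (Suc m)"
  have p: "fpos m x < length (slot_frontier n ps m)" "slot_frontier n ps m ! fpos m x = x"
    using pos_in_set[OF x] by auto
  have b: "ps!m + in_arity n (Suc m) \<le> length (slot_frontier n ps m)"
    using ps_fits_slot_frontier[OF m] .
  have h1: "ps!m \<le> fpos m x" "fpos m x < ps!m + in_arity n (Suc m)" using h by auto
  have lc: "fpos m x - ps!m < in_arity n (Suc m)" using h1 by linarith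
  have "sources n ps (Suc m) ! (fpos m x - ps!m)
    = drop (ps!m) (slot_frontier n ps m) ! (fpos m x - ps!m)"
    using sources_eq[OF m] lc by simp
  also have "\<dots> = slot_frontier n ps m ! (ps!m + (fpos m x - ps!m))"
    by (rule nth_drop) (use b in simp)
  also have "ps!m + (fpos m x - ps!m) = fpos m x" using h1 by simp
  finally have "sources n ps (Suc m) ! (fpos m x - ps!m) = slot_frontier n ps m ! fpos m x" .
  moreover have "fpos m x - ps!m < length (sources n ps (Suc m))"
    using lc by (simp add: sources_def)
  ultimately show False using nc p by (metis nth_mem)
qed

lemma fpos_Suc:
  assumes m: "m < 2*n" and x: "x \<in> set (slot_frontier n ps m)" and nc: "x \<notin> set
      (sources n ps (Suc m))"
  shows "x \<in> set (slot_frontier n ps (Suc m))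
      \<and> fpos (Suc m) x = (if fpos m x
      < ps!m then fpos m x else fpos m x + (3 - in_arity n (Suc m)) - in_arity n (Suc m))"
  using pos_replace_block[of "slot_frontier n ps (Suc m)" "ps!m" "slot_frontier n ps m" "out_slots
    n (Suc m)" "in_arity n (Suc m)" x]
    distinct_slot_frontier[of m] distinct_slot_frontier[of "Suc m"] m ps_fits_slot_frontier[OF m] x
      fpos_notin_block[OF m x nc]
  by (simp add: length_out_slots)

lemma fpos_src_final:
  assumes "1 \<le> w" "w \<le> 2*n" "j < in_arity n w"
  shows "src w j \<in> set (slot_frontier n ps (w - 1))
      \<and> fpos (w - 1) (src w j) = ps!(w-1) + j"
proof -
  have b: "ps!(w-1) + in_arity n (Suc (w-1)) \<le> length (slot_frontier n ps (w-1))"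
    using ps_fits_slot_frontier[of "w-1"] assms by simp
  have e: "src w j = slot_frontier n ps (w-1) ! (ps!(w-1) + j)"
    using assms by (simp add: source_def)
  have l: "ps!(w-1) + j < length (slot_frontier n ps (w-1))" using b assms by simp
  show ?thesis using pos_nth[OF distinct_slot_frontier[of "w-1"] l] e l assms by (simp add: nth_mem)
qed

lemma inputs_stay_left:
  assumes k: "k < 2*n" "Suc k < w" "w \<le> 2*n"
    and h: "\<forall>j<in_arity n w. src w j \<in> set (slot_frontier n ps k)
        \<and> fpos k (src w j) < ps!k"
  shows "Suc k \<le> m \<Longrightarrow> m \<le> w - 1
      \<Longrightarrow> \<forall>j<in_arity n w. src w j \<in> set (slot_frontier n ps m)
      \<and> fpos m (src w j) < ps!(m-1)"
proof (induction m)
  case 0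
  then show ?case by simp
next
  case (Suc m)
  show ?case
  proof (cases "m = k")
    case True
    show ?thesis
    proof (intro allI impI)
      fix j assume j: "j < in_arity n w"
      have nc: "src w j \<notin> set (sources n ps (Suc k))"
        using src_notin_sources[of k w j] k j by simp
      show "src w j \<in> set (slot_frontier n ps (Suc m))
        \<and> fpos (Suc m) (src w j) < ps!(Suc m - 1)"
        using fpos_Suc[OF k(1) _ nc] h j True by simp
    qed
  next
    case False
    then have m: "Suc k \<le> m" "m < w - 1" using Suc.prems by auto
    have IH: "\<forall>j<in_arity n w. src w j \<in> set (slot_frontier n ps m)
      \<and> fpos m (src w j) < ps!(m-1)" using Suc.IH m by simp
    have m2: "m < 2*n" using m k by simp
    have loc: "ps!(m-1) + 1 \<le> ps!m + in_arity n (Suc m)"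
      using ps_step[of "m-1"] m k by simp
    show ?thesis
    proof (intro allI impI)
      fix j assume j: "j < in_arity n w"
      have nc: "src w j \<notin> set (sources n ps (Suc m))"
        using src_notin_sources[of m w j] m k j by simp
      have xin: "src w j \<in> set (slot_frontier n ps m)" "fpos m (src w j) < ps!(m-1)"
        using IH j by auto
      have "fpos m (src w j) < ps!m" using fpos_notin_block[OF m2 xin(1) nc] xin(2) loc by linarith
      then show "src w j \<in> set (slot_frontier n ps (Suc m))
        \<and> fpos (Suc m) (src w j) < ps!(Suc m - 1)"
        using fpos_Suc[OF m2 xin(1) nc] by simp
    qed
  qed
qed

lemma inputs_stay_apart:
  assumes k: "k < 2*n" "Suc k < w" "w \<le> 2*n" and ab: "a < in_arity n w" "b < in_arity n w"
    and h: "src w a \<in> set (slot_frontier n ps k)" "src w b \<in> set (slot_frontier n ps k)"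
           "fpos k (src w a) < ps!k" "ps!k + in_arity n (Suc k) \<le> fpos k (src w b)"
  shows "Suc k \<le> m \<Longrightarrow> m \<le> w - 1
      \<Longrightarrow> src w a \<in> set (slot_frontier n ps m)
      \<and> src w b \<in> set (slot_frontier n ps m)
      \<and> fpos m (src w a) + 2 \<le> fpos m (src w b)"
proof (induction m)
  case 0
  then show ?case by simp
next
  case (Suc m)
  show ?case
  proof (cases "m = k")
    case True
    have nca: "src w a \<notin> set (sources n ps (Suc k))"
      using src_notin_sources[of k w a] k ab by simp
    have ncb: "src w b \<notin> set (sources n ps (Suc k))"
      using src_notin_sources[of k w b] k ab by simp
    show ?thesis using fpos_Suc[OF k(1) h(1) nca] fpos_Suc[OF k(1) h(2) ncb] h(3,4) True
      by (simp add: in_arity_def split: if_splits)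
  next
    case False
    then have m: "Suc k \<le> m" "m < w - 1" using Suc.prems by auto
    have IH: "src w a \<in> set (slot_frontier n ps m)
      \<and> src w b \<in> set (slot_frontier n ps m)
      \<and> fpos m (src w a) + 2 \<le> fpos m (src w b)"
      using Suc.IH m by simp
    have m2: "m < 2*n" using m k by simp
    have nca: "src w a \<notin> set (sources n ps (Suc m))"
      using src_notin_sources[of m w a] m k ab by simp
    have ncb: "src w b \<notin> set (sources n ps (Suc m))"
      using src_notin_sources[of m w b] m k ab by simp
    have ba: "\<not> (ps!m \<le> fpos m (src w a)
      \<and> fpos m (src w a) < ps!m + in_arity n (Suc m))"
      using fpos_notin_block[OF m2 _ nca] IH by simp
    have bb: "\<not> (ps!m \<le> fpos m (src w b)
      \<and> fpos m (src w b) < ps!m + in_arity n (Suc m))"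
      using fpos_notin_block[OF m2 _ ncb] IH by simp
    show ?thesis using fpos_Suc[OF m2 _ nca] fpos_Suc[OF m2 _ ncb] IH ba bb
      by (simp add: in_arity_def split: if_splits)
  qed
qed

text \<open>If an input of a later operator \<open>w\<close> sat left of the block consumed at
  step \<open>k\<close>, then either all inputs of \<open>w\<close> stay left of every block
  consumed before \<open>w\<close>, contradicting the step condition of \<open>pos_seqs\<close> at
  \<open>w\<close>, or two of them stay separated, although they must end up adjacent.\<close>

lemma inputs_right_of_block:
  assumes k: "k < 2*n" "Suc k < w" "w \<le> 2*n"
    and av: "\<forall>j<in_arity n w. src w j \<in> set (slot_frontier n ps k)"
  shows "j < in_arity n w \<Longrightarrow> ps!k < fpos k (src w j)"
proof (rule ccontr)
  assume j: "j < in_arity n w" and c: "\<not> ps!k < fpos k (src w j)"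
  have blk: "\<And>j. j < in_arity n w
    \<Longrightarrow> \<not> (ps!k \<le> fpos k (src w j)
    \<and> fpos k (src w j) < ps!k + in_arity n (Suc k))"
    using fpos_notin_block[OF k(1)] src_notin_sources[of k w] k av by simp
  have lt: "fpos k (src w j) < ps!k" using c blk[OF j] in_arity_pos[of n "Suc k"]
    by (cases "fpos k (src w j) = ps!k") auto
  have w1: "1 \<le> w" "Suc k \<le> w - 1" "w - 1 \<le> w - 1" using k by auto
  show False
  proof (cases "\<forall>j<in_arity n w. fpos k (src w j) < ps!k")
    case True
    have H: "\<forall>j<in_arity n w. src w j \<in> set (slot_frontier n ps (w-1))
      \<and> fpos (w-1) (src w j) < ps!(w-1-1)"
      using inputs_stay_left[OF k _ w1(2,3)] av True by simp
    let ?j = "in_arity n w - 1"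
    have "fpos (w-1) (src w ?j) = ps!(w-1) + ?j"
      using fpos_src_final[of w ?j] k in_arity_pos[of n w] by simp
    moreover have "fpos (w-1) (src w ?j) < ps!(w-1-1)" using H in_arity_pos[of n w] by simp
    moreover have "ps!(w-1-1) + 1 \<le> ps!(w-1) + in_arity n w"
    proof -
      have "w = Suc (Suc (w - 2))" using k by simp
      then obtain w' where w': "w = Suc (Suc w')" by blast
      show ?thesis using ps_step[of w'] k w' by simp
    qed
    ultimately show False using in_arity_pos[of n w] by linarith
  next
    case False
    then obtain j' where j': "j' < in_arity n w" "\<not> fpos k (src w j') < ps!k" by blast
    have "ps!k + in_arity n (Suc k) \<le> fpos k (src w j')" using blk[OF j'(1)] j'(2) by simp
    then have G: "fpos (w-1) (src w j) + 2 \<le> fpos (w-1) (src w j')"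
      using inputs_stay_apart[OF k j j'(1) _ _ lt _ w1(2,3)] av j j'(1) by simp
    have "fpos (w-1) (src w j) = ps!(w-1) + j" using fpos_src_final[of w j] k j by simp
    moreover have "fpos (w-1) (src w j') = ps!(w-1) + j'" using fpos_src_final[of w j'] k j' by simp
    ultimately show False using G j j'(1) by (simp add: in_arity_def split: if_splits)
  qed
qed

lemma leftpos_G:
  assumes k: "k < 2*n"
  shows "leftpos cop G (frontier cop G k) (Suc k) = ps!k"
proof -
  let ?T = "frontier_left k" and ?C = "ins cop G (Suc k)" and ?D = "frontier_right k"
  have F: "frontier cop G k = ?T @ ?C
    @ ?D" using frontier_G[of k] k frontier_step_parts(1)[OF k] by simp
  have d: "distinct (?T @ ?C @ ?D)"
    using distinct_map_out_edge[of k] k frontier_step_parts(1)[OF k] by simp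
  have Cne: "?C \<noteq> []" using ins_G[of "Suc k"] k sources_ne by simp
  have lenT: "length ?T = ps!k" using ps_fits_slot_frontier[OF k] by simp
  show ?thesis unfolding leftpos_def F using Min_pos_block[OF d Cne] lenT by simp
qed

lemma available_srcs:
  assumes k: "k \<le> 2*n" and w: "1 \<le> w" "w \<le> 2*n"
    and av: "set (ins cop G w) \<subseteq> set (frontier cop G k)" and j: "j < in_arity n w"
  shows "src w j \<in> set (slot_frontier n ps k)"
proof -
  have "out_edge (src w j) \<in> set (map out_edge (slot_frontier n ps k))"
    using av ins_G[OF w] frontier_G[OF k] j by (auto simp: sources_def)
  then obtain y where y: "y \<in> set (slot_frontier n ps k)" "out_edge y = out_edge (src w j)"
    by auto
  have "outSlot n cop y" using outSlot_slot_frontier[OF k] y by simp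
  moreover have "outSlot n cop (src w j)" using outSlot_source inSlot_operator w j by simp
  ultimately show ?thesis using out_edge_inj y by metis
qed

lemma leftpos_G_eq_Min:
  assumes k: "k \<le> 2*n" and w: "1 \<le> w" "w \<le> 2*n"
    and av: "\<forall>j<in_arity n w. src w j \<in> set (slot_frontier n ps k)"
  shows "leftpos cop G (frontier cop G k) w
      = Min ((\<lambda>j. fpos k (src w j)) ` {..<in_arity n w})"
proof -
  have "pos (out_edge (src w j)) (map out_edge (slot_frontier n ps k)) = fpos k (src w j)"
    if "j < in_arity n w" for j
    using pos_map[OF distinct_map_out_edge[OF k]] av that by simp
  then have "(\<lambda>e. pos e (frontier cop G k)) ` set (ins cop G w)
    = (\<lambda>j. fpos k (src w j)) ` {..<in_arity n w}"
    unfolding ins_G[OF w] frontier_G[OF k] by (force simp: sources_def image_iff)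
  then show ?thesis by (simp add: leftpos_def)
qed

lemma canonically_labelled_G: "canonically_labelled n cop G"
  unfolding canonically_labelled_def
proof (intro allI impI conjI)
  fix k assume k: "k < 2*n"
  show "available n cop G k (Suc k)"
    unfolding available_def using k frontier_step_parts(1)[OF k] frontier_G[of k]
    by (auto simp: verts_def)
  fix w assume "available n cop G k w \<and> w \<noteq> Suc k"
  then have w: "Suc k < w" "w \<le> 2*n" "1
    \<le> w" and ins: "set (ins cop G w) \<subseteq> set (frontier cop G k)"
    by (auto simp: available_def verts_def)
  have av: "\<forall>j<in_arity n w. src w j \<in> set (slot_frontier n ps k)"
    using available_srcs[of k w] k w ins by simp
  have "0 \<in> {..<in_arity n w}" using in_arity_pos[of n w] by simp
  then have "{..<in_arity n w} \<noteq> {}" by blast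
  then have "ps!k < Min ((\<lambda>j. fpos k (src w j)) ` {..<in_arity n w})"
    using inputs_right_of_block[OF k w(1,2) av] by (subst Min_gr_iff) auto
  then show "leftpos cop G (frontier cop G k) (Suc k) < leftpos cop G (frontier cop G k) w"
    using leftpos_G[OF k] leftpos_G_eq_Min[of k w] k w av by simp
qed

lemma prograph_of_in_PC: "prograph_of n ps \<in> PC_coprod_first n"
  unfolding PC_coprod_first_def using is_PC_prograph_G canonically_labelled_G by simp

lemma positions_of_G: "positions_of n G = ps"
  unfolding positions_of_def by (rule nth_equalityI) (simp_all add: leftpos_G length_ps)


end

section \<open>Canonical prographs come from position sequences\<close>

locale canonical_prograph =
  fixes n :: nat and E :: "pedge set"
  assumes n_pos: "n \<ge> 1"
    and PC: "is_PC_prograph n (coprods_first n) E"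
    and canonical: "canonically_labelled n (coprods_first n) E"
begin

abbreviation "cop \<equiv> coprods_first n"
abbreviation "ps \<equiv> positions_of n E"

lemma PC_facts:
  "\<forall>e\<in>E. outSlot n cop (fst e) \<and> inSlot n cop (snd e)"
  "\<forall>s. outSlot n cop s \<longrightarrow> (\<exists>!e. e \<in> E \<and> fst e = s)"
  "\<forall>s. inSlot n cop s \<longrightarrow> (\<exists>!e. e \<in> E \<and> snd e = s)"
  "upward_planar n cop E"
  using PC unfolding is_PC_prograph_def by auto


lemma outEdge_in:
  assumes "outSlot n cop s"
  shows "outEdge E (fst s) (snd s) \<in> E \<and> fst (outEdge E (fst s) (snd s)) = s"
proof -
  have "\<exists>!e. e \<in> E \<and> fst e = s" using PC_facts(2) assms by blast
  then show ?thesis unfolding outEdge_def prod.collapse by (rule theI')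
qed

lemma inEdge_in:
  assumes "inSlot n cop s"
  shows "inEdge E (fst s) (snd s) \<in> E \<and> snd (inEdge E (fst s) (snd s)) = s"
proof -
  have "\<exists>!e. e \<in> E \<and> snd e = s" using PC_facts(3) assms by blast
  then show ?thesis unfolding inEdge_def prod.collapse by (rule theI')
qed

lemma edge_eq_inEdge: "e \<in> E \<Longrightarrow> e = inEdge E (fst (snd e)) (snd (snd e))"
proof -
  assume e: "e \<in> E"
  have s: "inSlot n cop (snd e)" using PC_facts(1) e by auto
  have "inEdge E (fst (snd e)) (snd (snd e)) \<in> E
    \<and> snd (inEdge E (fst (snd e)) (snd (snd e))) = snd e"
    using inEdge_in[OF s] by simp
  then show ?thesis using PC_facts(3) s e by metis
qed


lemma ins_outs_wf: "u \<in> verts n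
  \<Longrightarrow> ins cop E u \<noteq> [] \<and> outs cop E u \<noteq> []
  \<and> (\<forall>e\<in>set (outs cop E u). fst (fst e) = u)"
proof -
  assume u: "u \<in> verts n"
  have "fst (outEdge E u i) = (u, i)" if "i < 3 - in_arity n u" for i
    using outEdge_in[OF outSlot_operator[of u n i]] u that by (simp add: verts_def)
  then show ?thesis by (auto simp: ins_def outs_def outs_eq_map in_arity_def)
qed

lemma map_fst_outs: "u \<in> verts n \<Longrightarrow> map fst (outs cop E u) = out_slots n u"
proof -
  assume u: "u \<in> verts n"
  have "fst (outEdge E u i) = (u, i)" if "i < 3 - in_arity n u" for i
    using outEdge_in[OF outSlot_operator[of u n i]] u that by (simp add: verts_def)
  then show ?thesis by (simp add: outs_eq_map out_slots_def in_arity_def numeral_2_eq_2 upt_rec)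
qed

lemma distinct_outs: "u \<in> verts n \<Longrightarrow> distinct (outs cop E u)"
  using map_fst_outs[of u] distinct_out_slots[of n u] by (metis distinct_map)

lemma fst_snd_ins:
  "u \<in> verts n \<Longrightarrow> e \<in> set (ins cop E u) \<Longrightarrow> fst (snd e) = u"
proof -
  assume u: "u \<in> verts n" and e: "e \<in> set (ins cop E u)"
  then obtain j where j: "j < in_arity n u" "e = inEdge E u j" by (auto simp: ins_eq_map)
  then show ?thesis using inEdge_in[OF inSlot_operator[of u n j]] u by (simp add: verts_def)
qed

lemma ins_disjoint: "u \<in> verts n \<Longrightarrow> w \<in> verts n
  \<Longrightarrow> u \<noteq> w
  \<Longrightarrow> set (ins cop E u) \<inter> set (ins cop E w) = {}"
  using fst_snd_ins by blast

lemma available_next: "k < 2*n \<Longrightarrow> available n cop E k (Suc k)"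
  using canonical unfolding canonically_labelled_def by blast

lemma leftpos_next_less:
  "k < 2*n \<Longrightarrow> available n cop E k w
    \<Longrightarrow> w \<noteq> Suc k \<Longrightarrow>
     leftpos cop E (frontier cop E k) (Suc k) < leftpos cop E (frontier cop E k) w"
  using canonical unfolding canonically_labelled_def by blast

text \<open>The sweep witnessing upward planarity can be reordered to follow the canonical
  labels: after \<open>k\<close> canonical steps the remaining operators still sweep the
  frontier.\<close>

definition sweep_invariant :: "nat \<Rightarrow> bool" where
  "sweep_invariant k = ((\<exists>vs. distinct vs \<and> set vs = {Suc k..2*n}
    \<and> sweeps cop E (frontier cop E k) vs [globalOut E]) \<and>
            distinct (frontier cop E k)
              \<and> (\<forall>e\<in>set (frontier cop E k). fst (fst e) \<notin> {Suc k..2*n}))"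

lemma fst_globalIn: "fst (globalIn E) = (0,0)"
  using outEdge_in[of "(0,0)"] by (simp add: globalIn_def outSlot_def)

lemma sweep_invariant_0: "sweep_invariant 0"
proof -
  obtain vs where vs: "distinct vs" "set vs = verts n" "sweeps cop E [globalIn E] vs [globalOut E]"
    using PC_facts(4) unfolding upward_planar_def by blast
  have "set vs = {Suc 0..2*n}" using vs(2) by (simp add: verts_def)
  then show ?thesis unfolding sweep_invariant_def using vs fst_globalIn by auto
qed


lemma frontier_replace_clean:
  assumes k: "k < 2*n" and distinct: "distinct (A @ ins cop E (Suc k) @ B)"
    and earlier: "\<forall>e\<in>set (A @ ins cop E (Suc k) @ B). fst (fst e) \<notin> {Suc k..2*n}"
  shows "distinct (A @ outs cop E (Suc k) @ B)"
    and "\<forall>e\<in>set (A @ outs cop E (Suc k) @ B). fst (fst e) \<notin> {Suc (Suc k)..2*n}"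
proof -
  have kv: "Suc k \<in> verts n" using k by (simp add: verts_def)
  have outs: "\<forall>e\<in>set (outs cop E (Suc k)). fst (fst e) = Suc k"
    using ins_outs_wf[OF kv] by simp
  have AB: "\<forall>e\<in>set A \<union> set B. fst (fst e) \<notin> {Suc k..2*n}"
    using earlier by auto
  have "e \<notin> set A \<union> set B" if "e \<in> set (outs cop E (Suc k))" for e
    using that outs AB k by force
  then have "set (outs cop E (Suc k)) \<inter> (set A \<union> set B) = {}" by blast
  then show "distinct (A @ outs cop E (Suc k) @ B)" using distinct distinct_outs[OF kv] by auto
  show "\<forall>e\<in>set (A @ outs cop E (Suc k) @ B). fst (fst e) \<notin> {Suc (Suc k)..2*n}"
    using AB outs by force
qed

lemma sweep_invariant_Suc:
  assumes k: "k < 2*n" and inv: "sweep_invariant k"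
  shows "\<exists>A B. frontier cop E k = A @ ins cop E (Suc k) @ B
      \<and> frontier cop E (Suc k) = A @ outs cop E (Suc k) @ B
           \<and> sweep_invariant (Suc k)"
proof -
  obtain vs where vs: "distinct vs" "set vs
    = {Suc k..2*n}" "sweeps cop E (frontier cop E k) vs [globalOut E]"
    using inv unfolding sweep_invariant_def by blast
  have dF: "distinct (frontier cop E k)" and srcF: "\<forall>e\<in>set (frontier cop E k). fst
    (fst e) \<notin> {Suc k..2*n}"
    using inv unfolding sweep_invariant_def by blast+
  have av: "set (ins cop E (Suc k)) \<subseteq> set (frontier cop E k)"
    using available_next[OF k] by (simp add: available_def)
  have sub: "set vs \<subseteq> verts n" using vs(2) by (auto simp: verts_def)
  have vin: "Suc k \<in> set vs" using vs(2) k by simp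
  have "\<forall>e\<in>set (frontier cop E k). fst (fst e) \<notin> set vs" using srcF vs(2) by simp
  from sweeps_move_to_front[OF vs(3), of "verts n", OF ins_outs_wf ins_disjoint sub vin vs(1) av
    this]
  obtain A B where AB: "frontier cop E k = A @ ins cop E (Suc k) @ B"
    and sw: "sweeps cop E (A @ outs cop E (Suc k) @ B) (remove1 (Suc k) vs) [globalOut E]"
    by blast
  have kv: "Suc k \<in> verts n" using k by (simp add: verts_def)
  have "ins cop E (Suc k) \<noteq> []" using ins_outs_wf[OF kv] by simp
  then have step: "frontier cop E (Suc k) = A @ outs cop E (Suc k) @ B"
    using Min_pos_block[of A "ins cop E (Suc k)" B] dF AB by (simp add: frontier_step_def Let_def)
  have "set (remove1 (Suc k) vs) = {Suc k..2*n} - {Suc k}"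
    using vs(1,2) by (simp add: set_remove1_eq)
  also have "\<dots> = {Suc (Suc k)..2*n}" by auto
  finally have "distinct (remove1 (Suc k) vs)" "set (remove1 (Suc k) vs) = {Suc (Suc k)..2*n}"
    using vs(1) by simp_all
  moreover have "distinct (A @ outs cop E (Suc k) @ B)"
    and "\<forall>e\<in>set (A @ outs cop E (Suc k) @ B). fst (fst e) \<notin> {Suc (Suc k)..2*n}"
    using frontier_replace_clean[OF k, of A B] dF srcF unfolding AB by blast+
  ultimately have "sweep_invariant (Suc k)"
    unfolding sweep_invariant_def step using sw by blast
  then show ?thesis using AB step by blast
qed

lemma sweep_invariant_all: "k \<le> 2*n \<Longrightarrow> sweep_invariant k"
proof (induction k)
  case 0
  then show ?case using sweep_invariant_0 by simp
next
  case (Suc k)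
  then show ?case using sweep_invariant_Suc[of k] by auto
qed

lemma frontier_decomp: "k < 2*n
  \<Longrightarrow> \<exists>A B. frontier cop E k = A @ ins cop E (Suc k) @ B
  \<and> frontier cop E (Suc k) = A @ outs cop E (Suc k) @ B"
  using sweep_invariant_Suc sweep_invariant_all by (meson less_imp_le)


lemma length_positions_of: "length ps = 2*n"
  by (simp add: positions_of_def)

lemma frontier_decomp_positions: "k < 2*n
  \<Longrightarrow> \<exists>A B. frontier cop E k = A @ ins cop E (Suc k) @ B \<and>
    frontier cop E (Suc k) = A @ outs cop E (Suc k) @ B \<and> length A = ps!k"
proof -
  assume k: "k < 2*n"
  obtain A B where AB: "frontier cop E k = A @ ins cop E (Suc k) @ B" "frontier cop E (Suc k) = A
    @ outs cop E (Suc k) @ B"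
    using frontier_decomp[OF k] by blast
  have d: "distinct (frontier cop E k)"
    using sweep_invariant_all[of k] k by (simp add: sweep_invariant_def)
  have kv: "Suc k \<in> verts n" using k by (simp add: verts_def)
  have Cne: "ins cop E (Suc k) \<noteq> []" using ins_outs_wf[OF kv] by simp
  have "leftpos cop E (frontier cop E k) (Suc k) = length A"
    unfolding leftpos_def AB(1) using Min_pos_block[of A "ins cop E (Suc k)" B] d AB(1) Cne by simp
  then have "length A = ps!k" using k by (simp add: positions_of_def)
  then show ?thesis using AB by blast
qed

lemma length_frontier:
  "k \<le> 2*n \<Longrightarrow> length (frontier cop E k) = frontier_length n k"
proof (induction k)
  case 0
  then show ?case by (simp add: frontier_length_def)
next
  case (Suc k)
  then have k: "k < 2*n" by simp
  obtain A B where AB: "frontier cop E k = A @ ins cop E (Suc k) @ B" "frontier cop E (Suc k) = A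
    @ outs cop E (Suc k) @ B"
    using frontier_decomp[OF k] by blast
  have "length (frontier cop E (Suc k)) = length (frontier cop E k) + 3 - 2 * in_arity n (Suc k)"
    using AB length_ins length_outs by (simp add: in_arity_def)
  then show ?case using Suc k by (simp add: frontier_length_def in_arity_def split: if_splits)
qed

lemma map_fst_frontier:
  "k \<le> 2*n \<Longrightarrow> map fst (frontier cop E k) = slot_frontier n ps k"
proof (induction k)
  case 0
  then show ?case using fst_globalIn by simp
next
  case (Suc k)
  then have k: "k < 2*n" by simp
  obtain A B where AB: "frontier cop E k = A @ ins cop E (Suc k) @ B" "frontier cop E (Suc k) = A
    @ outs cop E (Suc k) @ B"
    "length A = ps!k"
    using frontier_decomp_positions[OF k] by blast
  have kv: "Suc k \<in> verts n" using k by (simp add: verts_def)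
  have S: "slot_frontier n ps k = map fst A @ map fst (ins cop E (Suc k))
    @ map fst B" using Suc AB by simp
  have "slot_frontier n ps (Suc k) = map fst A @ out_slots n (Suc k) @ map fst B"
    using S AB(3) length_ins[of n E "Suc k"] by simp
  then show ?case using AB(2) map_fst_outs[OF kv] by simp
qed

lemma frontier_final: "frontier cop E (2*n) = [globalOut E]"
proof -
  obtain vs where "distinct vs" "set vs
    = {Suc (2*n)..2*n}" "sweeps cop E (frontier cop E (2*n)) vs [globalOut E]"
    using sweep_invariant_all[of "2*n"] by (auto simp: sweep_invariant_def)
  then show ?thesis using sweeps_NilD by fastforce
qed

lemma fst_inEdge: "inSlot n cop t \<Longrightarrow> fst (inEdge E (fst t) (snd t)) = source n ps t"
proof -
  assume t: "inSlot n cop t"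
  show ?thesis
  proof (cases "fst t = 0")
    case True
    then have "fst t = 0 \<and> snd t = 0" using t by (auto simp: inSlot_def verts_def)
    then have t0: "t = (0,0)" by (cases t) auto
    have "map fst (frontier cop E (2*n)) = slot_frontier n ps (2*n)" using map_fst_frontier by simp
    then have "slot_frontier n ps (2*n) = [fst (globalOut E)]" using frontier_final by simp
    then show ?thesis using t0 by (simp add: source_def globalOut_def)
  next
    case False
    then have v: "1 \<le> fst t" "fst t \<le> 2*n" "snd t < in_arity n (fst t)"
      using t by (auto simp: inSlot_def verts_def in_arity_def split: if_splits)
    define k where "k = fst t - 1"
    have k: "k < 2*n" "Suc k = fst t" using v by (auto simp: k_def)
    obtain A B where AB: "frontier cop E k = A @ ins cop E (fst t) @ B" "length A = ps!k"
      using frontier_decomp_positions[OF k(1)] unfolding k(2) by blast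
    have "frontier cop E k ! (ps!k + snd t) = inEdge E (fst t) (snd t)"
      and "ps!k + snd t < length (frontier cop E k)"
      using AB v by (simp_all add: nth_append length_ins ins_eq_map)
    moreover have "slot_frontier n ps k
      = map fst (frontier cop E k)" using map_fst_frontier k by simp
    ultimately have "slot_frontier n ps k ! (ps!k + snd t) = fst (inEdge E (fst t) (snd t))" by simp
    then show ?thesis using False by (simp add: source_def k_def)
  qed
qed

lemma E_eq_prograph_of: "E = prograph_of n ps"
proof
  show "E \<subseteq> prograph_of n ps"
  proof
    fix e assume e: "e \<in> E"
    have t: "inSlot n cop (snd e)" using PC_facts(1) e by auto
    have "e = inEdge E (fst (snd e)) (snd (snd e))" using edge_eq_inEdge[OF e] .
    then have "fst e = source n ps (snd e)" using fst_inEdge[OF t] by simp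
    then have ee: "e = (source n ps (snd e), snd e)" by (cases e) simp
    show "e \<in> prograph_of n ps" unfolding prograph_of_def
      by (rule image_eqI[where x="snd e"]) (use ee t in auto)
  qed
next
  show "prograph_of n ps \<subseteq> E"
  proof
    fix e assume "e \<in> prograph_of n ps"
    then obtain t where t: "inSlot n cop t" "e = (source n ps t, t)"
      unfolding prograph_of_def by blast
    have "inEdge E (fst t) (snd t) \<in> E
      \<and> snd (inEdge E (fst t) (snd t)) = t" using inEdge_in[OF t(1)] .
    moreover have "fst (inEdge E (fst t) (snd t)) = source n ps t" using fst_inEdge[OF t(1)] .
    ultimately show "e \<in> E" using t(2) by (metis prod.collapse)
  qed
qed


lemma positions_of_fit:
  "k < 2*n \<Longrightarrow> ps!k + in_arity n (Suc k) \<le> frontier_length n k"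
  using frontier_decomp_positions[of k] length_frontier[of k] length_ins[of n E "Suc k"] by auto

text \<open>Otherwise all inputs of operator \<open>k + 2\<close> would already lie in the
  frontier at step \<open>k\<close>, strictly left of those of operator \<open>k + 1\<close>,
  contradicting canonicity.\<close>

lemma positions_of_step:
  assumes k: "Suc k < 2*n"
  shows "ps!k + 1 \<le> ps!(Suc k) + in_arity n (Suc (Suc k))"
proof (rule ccontr)
  assume c: "\<not> ?thesis"
  obtain A B where AB: "frontier cop E k = A @ ins cop E (Suc k) @ B"
    "frontier cop E (Suc k) = A @ outs cop E (Suc k) @ B" "length A = ps!k"
    using frontier_decomp_positions[of k] k by auto
  let ?I = "ins cop E (Suc (Suc k))"
  obtain A' B' where AB': "frontier cop E (Suc k) = A' @ ?I @ B'" "length A' = ps!(Suc k)"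
    using frontier_decomp_positions[of "Suc k"] k by auto
  have "length A' + length ?I \<le> length A" using c AB(3) AB'(2) length_ins by simp
  then obtain M where "A = A' @ ?I @ M"
    using append_block_prefix[of A "outs cop E (Suc k)" B A' ?I B'] AB(2) AB'(1) by auto
  then have F: "frontier cop E k = A' @ ?I @ (M @ ins cop E (Suc k) @ B)"
    using AB(1) by simp
  have d: "distinct (frontier cop E k)"
    using sweep_invariant_all[of k] k by (simp add: sweep_invariant_def)
  have kv: "Suc (Suc k) \<in> verts n" using k by (simp add: verts_def)
  have Ine: "?I \<noteq> []" using ins_outs_wf[OF kv] by simp
  have "available n cop E k (Suc (Suc k))"
    unfolding available_def using kv F by auto
  then have "leftpos cop E (frontier cop E k) (Suc k)
    < leftpos cop E (frontier cop E k) (Suc (Suc k))"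
    using leftpos_next_less k by simp
  moreover have "leftpos cop E (frontier cop E k) (Suc k) = length A"
    using AB(3) k by (simp add: positions_of_def)
  moreover have "leftpos cop E (frontier cop E k) (Suc (Suc k)) = length A'"
    unfolding leftpos_def F using Min_pos_block[of A' ?I] d F Ine by simp
  ultimately show False using \<open>A = A' @ ?I @ M\<close> Ine by simp
qed

lemma positions_of_in_pos_seqs: "ps \<in> pos_seqs n"
  unfolding pos_seqs_def using length_positions_of positions_of_fit positions_of_step by blast

end

section \<open>Counting\<close>

lemma bij_betw_prograph_of:
  assumes "n \<ge> 1"
  shows "bij_betw (prograph_of n) (pos_seqs n) (PC_coprod_first n)"
proof (rule bij_betwI')
  fix ps ps' assume "ps \<in> pos_seqs n" "ps' \<in> pos_seqs n"
  then show "(prograph_of n ps = prograph_of n ps') = (ps = ps')"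
    using pos_seq.positions_of_G[OF pos_seq.intro, OF assms] by metis
next
  fix ps assume "ps \<in> pos_seqs n"
  then show "prograph_of n ps \<in> PC_coprod_first n"
    using pos_seq.prograph_of_in_PC[OF pos_seq.intro, OF assms] by blast
next
  fix E assume "E \<in> PC_coprod_first n"
  then interpret canonical_prograph n E
    using assms by unfold_locales (simp_all add: PC_coprod_first_def)
  show "\<exists>ps \<in> pos_seqs n. E = prograph_of n ps"
    using positions_of_in_pos_seqs E_eq_prograph_of by blast
qed

lemma pos_seqs_D:
  assumes "n \<ge> 1" and "ps \<in> pos_seqs n"
  shows "take n ps \<in> catalan_seqs n" and "drop n ps \<in> dual_catalan_seqs n"
    and "ps!(n - 1) \<le> ps!n + 1"
proof -
  have len: "length ps = 2*n" and fit: "\<And>k. k < 2*n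
    \<Longrightarrow> ps!k + in_arity n (Suc k) \<le> frontier_length n k"
    and step: "\<And>k. Suc k < 2*n
        \<Longrightarrow> ps!k + 1 \<le> ps!(Suc k) + in_arity n (Suc (Suc k))"
    using assms(2) by (auto simp: pos_seqs_def)
  have "ps!k \<le> k" if "k < n" for k
    using fit[of k] that by (simp add: in_arity_le frontier_length_def)
  moreover have "ps!k \<le> ps!Suc k" if "Suc k < n" for k
    using step[of k] that by (simp add: in_arity_le)
  ultimately show "take n ps \<in> catalan_seqs n" using len by (auto simp: catalan_seqs_def)
  have "ps!(n + j) + j + 1 \<le> n" if "j < n" for j
    using fit[of "n + j"] that by (simp add: in_arity_gt frontier_length_def split: if_splits)
  moreover have "ps!(n + j) \<le> ps!(n + Suc j) + 1" if "Suc j < n" for j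
    using step[of "n + j"] that by (simp add: in_arity_gt)
  ultimately show "drop n ps \<in> dual_catalan_seqs n"
    using len by (auto simp: dual_catalan_seqs_def)
  show "ps!(n - 1) \<le> ps!n + 1" using step[of "n - 1"] assms(1) by (simp add: in_arity_gt)
qed

lemma pos_seqs_I:
  assumes n: "n \<ge> 1" and len: "length ps = 2*n" and "take n ps \<in> catalan_seqs n"
    and "drop n ps \<in> dual_catalan_seqs n" and middle: "ps!(n - 1) \<le> ps!n + 1"
  shows "ps \<in> pos_seqs n"
proof -
  have c1: "\<And>k. k < n \<Longrightarrow> ps!k \<le> k" and c2: "\<And>k. Suc k < n
    \<Longrightarrow> ps!k \<le> ps!Suc k"
    using assms(3) by (auto simp: catalan_seqs_def)
  have d1: "\<And>j. j < n \<Longrightarrow> ps!(n + j) + j + 1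
    \<le> n" and d2: "\<And>j. Suc j < n \<Longrightarrow> ps!(n + j) \<le> ps!(n + Suc j) + 1"
    using assms(4) len by (auto simp: dual_catalan_seqs_def)
  have "ps!k + in_arity n (Suc k) \<le> frontier_length n k" if k: "k < 2*n" for k
  proof (cases "k < n")
    case True
    then show ?thesis using c1[of k] by (simp add: in_arity_le frontier_length_def)
  next
    case False
    then have "k = n + (k - n)" "k - n < n" using k by simp_all
    then show ?thesis using d1[of "k - n"] by (auto simp: in_arity_gt frontier_length_def)
  qed
  moreover have "ps!k + 1 \<le> ps!(Suc k) + in_arity n (Suc (Suc k))" if k: "Suc k < 2*n" for k
  proof -
    consider "Suc k < n" | "k = n - 1" | j where "k = n + j" "Suc j < n"
    proof (cases "k < n")
      case False
      then have "k = n + (k - n)" "Suc (k - n) < n" using k by simp_all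
      then show thesis using that(3) by blast
    qed (use that in \<open>force+\<close>)
    then show ?thesis
    proof cases
      case 1
      then show ?thesis using c2[of k] by (simp add: in_arity_le)
    next
      case 2
      then show ?thesis using middle n by (simp add: in_arity_gt)
    next
      case 3
      then show ?thesis using d2[of j] by (simp add: in_arity_gt)
    qed
  qed
  ultimately show ?thesis using len by (simp add: pos_seqs_def)
qed

lemma bij_betw_split_pos_seqs:
  assumes n: "n \<ge> 1"
  shows "bij_betw (\<lambda>ps. (take n ps, from_dual n (drop n ps))) (pos_seqs n)
           {(p, q). p \<in> catalan_seqs n \<and> q \<in> catalan_seqs n
             \<and> p!(n - 1) + q!(n - 1) \<le> n}"
proof (rule bij_betwI')
  fix ps ps' assume ps: "ps \<in> pos_seqs n" "ps' \<in> pos_seqs n"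
  show "((take n ps, from_dual n (drop n ps)) = (take n ps', from_dual n (drop n ps')))
    = (ps = ps')"
  proof
    assume eq: "(take n ps, from_dual n (drop n ps)) = (take n ps', from_dual n (drop n ps'))"
    then have "drop n ps = drop n ps'"
      using inj_onD[OF inj_on_from_dual] pos_seqs_D(2)[OF n] ps by (metis prod.inject)
    then show "ps = ps'" using eq by (metis append_take_drop_id prod.inject)
  qed simp
next
  fix ps assume ps: "ps \<in> pos_seqs n"
  have len: "length ps = 2*n" using ps by (simp add: pos_seqs_def)
  have dual: "drop n ps \<in> dual_catalan_seqs n" by (rule pos_seqs_D(2)[OF n ps])
  have "from_dual n (drop n ps) ! (n - 1) = n - 1 - ps!n"
    using from_dual_last[OF n] len by simp
  moreover have "ps!n + 1 \<le> n" using dual_catalan_seqs_hd_bound[OF dual n] len by simp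
  ultimately show "(take n ps, from_dual n (drop n ps))
      \<in> {(p, q). p \<in> catalan_seqs n \<and> q \<in> catalan_seqs n
        \<and> p!(n - 1) + q!(n - 1) \<le> n}"
    using pos_seqs_D[OF n ps] from_dual_in_catalan_seqs[OF dual] n by simp
next
  fix pq assume "pq \<in> {(p, q). p \<in> catalan_seqs n \<and> q \<in> catalan_seqs n
    \<and> p!(n - 1) + q!(n - 1) \<le> n}"
  then obtain p q where pq: "pq
    = (p, q)" "p \<in> catalan_seqs n" "q \<in> catalan_seqs n" "p!(n - 1) + q!(n - 1) \<le> n"
    by blast
  obtain m where m: "m \<in> dual_catalan_seqs n" "from_dual n m = q"
    using from_dual_image[of n] pq(3) by (metis imageE)
  have lp: "length p = n" and lm: "length m = n"
    using pq(2) m(1) by (simp_all add: catalan_seqs_def dual_catalan_seqs_def)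
  have "q!(n - 1) = n - 1 - m!0" using from_dual_last[OF n] m(2) by blast
  moreover have "m!0 + 1 \<le> n" by (rule dual_catalan_seqs_hd_bound[OF m(1) n])
  ultimately have "p @ m \<in> pos_seqs n"
    using pos_seqs_I[OF n, of "p @ m"] lp lm pq(2,4) m(1) n by (simp add: nth_append)
  moreover have "pq = (take n (p @ m), from_dual n (drop n (p @ m)))" using lp pq(1) m(2) by simp
  ultimately show "\<exists>ps \<in> pos_seqs n. pq = (take n ps, from_dual n (drop n ps))" by blast
qed

lemma int_card_PC_coprod_first:
  assumes "n \<ge> 1"
  shows "int (card (PC_coprod_first n))
     = (\<Sum>(d1, d2) \<in> {(d1, d2). d1 + d2 \<le> n}. Cb (n - 1) d1 * Cb (n - 1) d2)"
proof -
  have "card (PC_coprod_first n)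
      = card {(p, q). p \<in> catalan_seqs n \<and> q \<in> catalan_seqs n
        \<and> p!(n - 1) + q!(n - 1) \<le> n}"
    using bij_betw_same_card[OF bij_betw_prograph_of[OF assms]]
      bij_betw_same_card[OF bij_betw_split_pos_seqs[OF assms]] by simp
  moreover have "int (card {p \<in> catalan_seqs n. p!(n - 1) = d})
    = Cb (n - 1) d" if "d \<le> n" for d
    using int_count_catalan_last[of d "n - 1"] that assms by (simp add: count_catalan_last_def)
  ultimately show ?thesis
    using int_card_pairs_eq_sum_Cb[OF finite_catalan_seqs] by presburger
qed

theorem mainTheorem3:
  fixes n :: nat
  assumes "n \<ge> 1"
  shows "card (PC_coprod_first n) =
           card {(T1 :: unit tree, T2 :: unit tree). size T1 = n \<and> size T2 = n \<and> dg T1 + dg T2 \<le> n}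
       \<and> int (card {(T1 :: unit tree, T2 :: unit tree). size T1 = n \<and> size T2 = n \<and> dg T1 + dg T2 \<le> n})
           = (\<Sum>(d1, d2) \<in> {(d1 :: nat, d2 :: nat). d1 + d2 \<le> n}. Cb (n - 1) d1 * Cb (n - 1) d2)
       \<and> (\<Sum>(d1, d2) \<in> {(d1 :: nat, d2 :: nat). d1 + d2 \<le> n}. Cb (n - 1) d1 * Cb (n - 1) d2)
           = int ((3*n) choose n) - 2 * int ((3*n) choose (n - 1))
             + (if n \<ge> 2 then int ((3*n) choose (n - 2)) else 0)"
  using int_card_PC_coprod_first[OF assms] int_card_tree_pairs[OF assms] sum_pairs_Cb[OF assms]
  by simp

end
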